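(* Let $d,\alpha,\gamma>0$, $T>0$, $l_0>0$, let $\rho:\mathbb{R}\to(0,\infty)$ be continuously differentiable and $T$-periodic with $\rho(0)=1$, and let $g$ satisfy (A1), (B1), (B2) as in the context. Let $$R_0=\frac{\alpha}{\frac{d\lambda_1}{T}\int_0^T\frac{1}{\rho^2(t)}\,dt-\frac{1}{T}\ln g'(0)},$$ where $\lambda_1=(\pi/l_0)^2$ is the principal Dirichlet eigenvalue of $-\frac{d^2}{dy^2}$ on $(0,l_0)$. If $R_0<1$, then the solution $v(t,y)$ of $$\begin{cases}v_t=\frac{d}{\rho^2(t)}v_{yy}+\left(\alpha-\frac{\dot\rho(t)}{\rho(t)}\right)v-\gamma v^2, & y\in(0,l_0),\ t\in((nT)^+,(n+1)T],\ n=0,1,2,\dots,\\ v(t,0)=v(t,l_0)=0, & t>0,\\ v(0,y)=v_0(y)\ge0,\ v_0\not\equiv0, & y\in(0,l_0),\\ v((nT)^+,y)=g(v(nT,y)), & y\in(0,l_0),\ n=0,1,2,\dots\end{cases}$$ satisfies $\lim_{t\to\infty}v(t,y)=0$ uniformly for $y\in[0,l_0]$.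
   Context: (A1): $g$ is continuously differentiable on $[0,\infty)$, $g(0)=0$, $g'(0)>0$, and for $u>0$: $g(u)>0$, $g(u)/u$ is nonincreasing, $0<g(u)/u<1$. (B1): $g$ is nondecreasing on $[0,\infty)$. (B2): there are positive constants $D$, $\sigma$ and $\nu>1$ such that $g(u)\ge g'(0)u-Du^\nu$ for $0\le u\le\sigma$. $(nT)^+$ denotes the right limit at time $nT$. *)

theory Defs
  imports "HOL-Analysis.Analysis"
begin

text \<open>Classical solution of the reaction-diffusion equation
  w_t = d/rho(t)^2 w_yy + (alpha - rho'(t)/rho(t)) w - gamma w^2
  on the time slab (a,b] x (0,l0), with homogeneous Dirichlet data for t in (a,b],
  initial datum w(a,y) = u0(y) for y in (0,l0); w is continuous and bounded on
  ([a,b] x (0,l0)) union ((a,b] x [0,l0]) (continuity at the two bottom corners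
  is not required, allowing incompatible data).  Derivatives at t = b are one-sided.\<close>

definition piece_solution ::
  "real \<Rightarrow> real \<Rightarrow> real \<Rightarrow> (real \<Rightarrow> real) \<Rightarrow> (real \<Rightarrow> real) \<Rightarrow>
   real \<Rightarrow> real \<Rightarrow> real \<Rightarrow> (real \<Rightarrow> real) \<Rightarrow> (real \<Rightarrow> real \<Rightarrow> real) \<Rightarrow> bool" where
  "piece_solution d \<alpha> \<gamma> \<rho> \<rho>' a b l0 u0 w \<longleftrightarrow>
     continuous_on (({a..b} \<times> {0<..<l0}) \<union> ({a<..b} \<times> {0..l0})) (\<lambda>p. w (fst p) (snd p)) \<and>
     bounded ((\<lambda>p. w (fst p) (snd p)) ` (({a..b} \<times> {0<..<l0}) \<union> ({a<..b} \<times> {0..l0}))) \<and>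
     (\<forall>y\<in>{0<..<l0}. w a y = u0 y) \<and>
     (\<forall>t\<in>{a<..b}. w t 0 = 0 \<and> w t l0 = 0) \<and>
     (\<forall>t\<in>{a<..b}. \<forall>y\<in>{0<..<l0}. \<exists>wt wy wyy.
        ((\<lambda>s. w s y) has_real_derivative wt) (at t within {a..b}) \<and>
        (\<forall>z\<in>{0<..<l0}. ((\<lambda>x. w t x) has_real_derivative wy z) (at z)) \<and>
        (wy has_real_derivative wyy) (at y) \<and>
        wt = d / (\<rho> t)\<^sup>2 * wyy + (\<alpha> - \<rho>' t / \<rho> t) * w t y - \<gamma> * (w t y)\<^sup>2)"

definition impulsive_solution ::
  "real \<Rightarrow> real \<Rightarrow> real \<Rightarrow> (real \<Rightarrow> real) \<Rightarrow> (real \<Rightarrow> real) \<Rightarrow> (real \<Rightarrow> real) \<Rightarrow>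
   real \<Rightarrow> real \<Rightarrow> (real \<Rightarrow> real) \<Rightarrow> (real \<Rightarrow> real \<Rightarrow> real) \<Rightarrow> bool" where
  "impulsive_solution d \<alpha> \<gamma> \<rho> \<rho>' g T l0 v0 v \<longleftrightarrow>
     (\<forall>y\<in>{0..l0}. v 0 y = v0 y) \<and>
     (\<forall>n::nat. \<exists>w. piece_solution d \<alpha> \<gamma> \<rho> \<rho>' (real n * T) (real (Suc n) * T) l0
                        (\<lambda>y. g (v (real n * T) y)) w \<and>
                   (\<forall>t\<in>{real n * T<..real (Suc n) * T}. \<forall>y\<in>{0..l0}. v t y = w t y))"

end

theory Submission
  imports Defs
begin

text \<open>Since \<open>g u \<le> g'(0) u\<close>, each impulse multiplies the solution by at most \<open>g'(0)\<close>.
  Between impulses the maximum principle squeezes the solution between \<open>0\<close> and the separable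
  solution \<open>M \<rho>(nT) / \<rho>(t) exp (\<alpha> (t - nT) - d \<mu>\<^sup>2 \<integral>\<^sub>n\<^sub>T\<^sup>t \<rho>\<^sup>-\<^sup>2) cos (\<mu> (y - l\<^sub>0/2))\<close> of the
  linearised equation; the logistic term only helps. Over one period the profile
  \<open>cos (\<mu> (y - l\<^sub>0/2))\<close> is therefore multiplied by at most
  \<open>q = g'(0) exp (\<alpha> T - d \<mu>\<^sup>2 \<integral>\<^sub>0\<^sup>T \<rho>\<^sup>-\<^sup>2)\<close>, and \<open>R\<^sub>0 < 1\<close> is exactly what allows a
  choice of \<open>\<mu> < \<pi> / l\<^sub>0\<close>, keeping the profile positive on \<open>[0, l\<^sub>0]\<close>, with \<open>q < 1\<close>.
  Hence the solution decays geometrically from period to period. Since the data need not be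
  continuous at the two bottom corners of each time slab, the maximum principle is proved with a
  heat-kernel barrier concentrated at those corners.\<close>

section \<open>Classical derivatives and the maximum principle\<close>

lemma DERIV_nonneg_at_left_max:
  fixes f :: "real \<Rightarrow> real"
  assumes der: "(f has_real_derivative D) (at t within {a..b})" and "a < t" "t \<le> b"
    and max: "\<forall>s\<in>{a..b}. f s \<le> f t"
  shows "D \<ge> 0"
proof (rule ccontr)
  assume "\<not> D \<ge> 0"
  then obtain \<delta> where \<delta>: "\<delta> > 0" "\<forall>h>0. t - h \<in> {a..b} \<longrightarrow> h < \<delta> \<longrightarrow> f t < f (t - h)"
    using has_real_derivative_neg_dec_left[OF der] by force
  define h where "h = min (\<delta>/2) (t - a)"
  have "h > 0" "h < \<delta>" "t - h \<in> {a..b}"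
    using \<delta> assms unfolding h_def by auto
  with \<delta> max show False by force
qed

lemma DERIV2_nonpos_at_interior_max:
  fixes f f' :: "real \<Rightarrow> real"
  assumes y: "a < y" "y < b"
    and der: "\<And>z. z \<in> {a<..<b} \<Longrightarrow> (f has_real_derivative f' z) (at z)"
    and der2: "(f' has_real_derivative f'') (at y)"
    and max: "\<forall>z\<in>{a<..<b}. f z \<le> f y"
  shows "f'' \<le> 0"
proof (rule ccontr)
  assume "\<not> f'' \<le> 0"
  then obtain \<delta> where \<delta>: "\<delta> > 0" "\<forall>h>0. h < \<delta> \<longrightarrow> f' y < f' (y + h)"
    using has_real_derivative_pos_inc_right[OF der2] by force
  have "\<forall>z. \<bar>y - z\<bar> < min (y - a) (b - y) \<longrightarrow> f z \<le> f y"
    using max by (auto simp: abs_if split: if_splits)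
  then have f'y: "f' y = 0"
    using DERIV_local_max[of f "f' y" y "min (y - a) (b - y)"] der y by auto
  define h where "h = min (\<delta>/2) ((b - y)/2)"
  have "h \<le> (b - y)/2"
    unfolding h_def by (rule min.cobounded2)
  then have h: "0 < h" "h < \<delta>" "y + h < b"
    using \<delta> y unfolding h_def by auto
  obtain z where z: "y < z" "z < y + h" "f (y + h) - f y = h * f' z"
    using MVT2[of y "y + h" f f'] h y der by auto
  have "0 < h * f' z"
    using \<delta>(2)[rule_format, of "z - y"] z h f'y by simp
  moreover have "f (y + h) \<le> f y"
    using max h y by auto
  ultimately show False
    using z(3) by linarith
qed

definition parabolic_domain :: "real \<Rightarrow> real \<Rightarrow> real \<Rightarrow> (real \<times> real) set" where
  "parabolic_domain a b l = ({a..b} \<times> {0<..<l}) \<union> ({a<..b} \<times> {0..l})"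

definition classical_derivs ::
  "(real \<Rightarrow> real \<Rightarrow> real) \<Rightarrow> real \<Rightarrow> real \<Rightarrow> real \<Rightarrow> real \<Rightarrow> real \<Rightarrow> (real \<Rightarrow> real \<Rightarrow> bool) \<Rightarrow> bool"
where
  "classical_derivs u a b l t y P \<longleftrightarrow> (\<exists>ut uy uyy.
     ((\<lambda>s. u s y) has_real_derivative ut) (at t within {a..b}) \<and>
     (\<forall>z\<in>{0<..<l}. ((\<lambda>x. u t x) has_real_derivative uy z) (at z)) \<and>
     (uy has_real_derivative uyy) (at y) \<and> P ut uyy)"

lemma classical_derivsI:
  assumes "((\<lambda>s. u s y) has_real_derivative ut) (at t within {a..b})"
    and "\<And>z. z \<in> {0<..<l} \<Longrightarrow> ((\<lambda>x. u t x) has_real_derivative uy z) (at z)"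
    and "(uy has_real_derivative uyy) (at y)" "P ut uyy"
  shows "classical_derivs u a b l t y P"
  using assms unfolding classical_derivs_def by blast

lemma classical_derivsE:
  assumes "classical_derivs u a b l t y P"
  obtains ut uy uyy where "((\<lambda>s. u s y) has_real_derivative ut) (at t within {a..b})"
    and "\<And>z. z \<in> {0<..<l} \<Longrightarrow> ((\<lambda>x. u t x) has_real_derivative uy z) (at z)"
    and "(uy has_real_derivative uyy) (at y)" "P ut uyy"
  using assms unfolding classical_derivs_def by blast

lemma classical_derivs_mono:
  assumes "classical_derivs u a b l t y P" "\<And>ut uyy. P ut uyy \<Longrightarrow> Q ut uyy"
  shows "classical_derivs u a b l t y Q"
  using assms unfolding classical_derivs_def by blast

lemma classical_derivs_diff:
  assumes "classical_derivs u a b l t y P" "classical_derivs h a b l t y Q"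
    and "\<And>ut uyy ht hyy. P ut uyy \<Longrightarrow> Q ht hyy \<Longrightarrow> R (ut - ht) (uyy - hyy)"
  shows "classical_derivs (\<lambda>t y. u t y - h t y) a b l t y R"
proof -
  obtain ut uy uyy where u: "((\<lambda>s. u s y) has_real_derivative ut) (at t within {a..b})"
    "\<And>z. z \<in> {0<..<l} \<Longrightarrow> ((\<lambda>x. u t x) has_real_derivative uy z) (at z)"
    "(uy has_real_derivative uyy) (at y)" "P ut uyy"
    using assms(1) by (rule classical_derivsE) auto
  obtain ht hy hyy where h: "((\<lambda>s. h s y) has_real_derivative ht) (at t within {a..b})"
    "\<And>z. z \<in> {0<..<l} \<Longrightarrow> ((\<lambda>x. h t x) has_real_derivative hy z) (at z)"
    "(hy has_real_derivative hyy) (at y)" "Q ht hyy"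
    using assms(2) by (rule classical_derivsE) auto
  show ?thesis
  proof (rule classical_derivsI)
    show "((\<lambda>s. u s y - h s y) has_real_derivative ut - ht) (at t within {a..b})"
      using u(1) h(1) by (rule DERIV_diff)
    show "((\<lambda>x. u t x - h t x) has_real_derivative uy z - hy z) (at z)" if "z \<in> {0<..<l}" for z
      using u(2)[OF that] h(2)[OF that] by (rule DERIV_diff)
    show "((\<lambda>z. uy z - hy z) has_real_derivative uyy - hyy) (at y)"
      using u(3) h(3) by (rule DERIV_diff)
    show "R (ut - ht) (uyy - hyy)"
      using assms(3) u(4) h(4) .
  qed
qed

lemma classical_derivs_uminus:
  assumes "classical_derivs u a b l t y P" "\<And>ut uyy. P ut uyy \<Longrightarrow> Q (- ut) (- uyy)"
  shows "classical_derivs (\<lambda>t y. - u t y) a b l t y Q"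
proof -
  obtain ut uy uyy where u: "((\<lambda>s. u s y) has_real_derivative ut) (at t within {a..b})"
    "\<And>z. z \<in> {0<..<l} \<Longrightarrow> ((\<lambda>x. u t x) has_real_derivative uy z) (at z)"
    "(uy has_real_derivative uyy) (at y)" "P ut uyy"
    using assms(1) by (rule classical_derivsE) auto
  show ?thesis
  proof (rule classical_derivsI)
    show "((\<lambda>s. - u s y) has_real_derivative - ut) (at t within {a..b})"
      using u(1) by (rule DERIV_minus)
    show "((\<lambda>x. - u t x) has_real_derivative - uy z) (at z)" if "z \<in> {0<..<l}" for z
      using u(2)[OF that] by (rule DERIV_minus)
    show "((\<lambda>z. - uy z) has_real_derivative - uyy) (at y)"
      using u(3) by (rule DERIV_minus)
    show "Q (- ut) (- uyy)"
      using assms(2)[OF u(4)] .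
  qed
qed

lemma classical_derivs_scale_time:
  assumes "classical_derivs z a b l t y P" "(E has_real_derivative E') (at t within {a..b})"
    and "\<And>zt zyy. P zt zyy \<Longrightarrow> R (E' * z t y + E t * zt) (E t * zyy)"
  shows "classical_derivs (\<lambda>t y. E t * z t y) a b l t y R"
proof -
  obtain zt zy zyy where z: "((\<lambda>s. z s y) has_real_derivative zt) (at t within {a..b})"
    "\<And>x. x \<in> {0<..<l} \<Longrightarrow> ((\<lambda>x. z t x) has_real_derivative zy x) (at x)"
    "(zy has_real_derivative zyy) (at y)" "P zt zyy"
    using assms(1) by (rule classical_derivsE) auto
  show ?thesis
  proof (rule classical_derivsI)
    show "((\<lambda>s. E s * z s y) has_real_derivative E' * z t y + E t * zt) (at t within {a..b})"
      using DERIV_mult[OF assms(2) z(1)] by (simp add: algebra_simps)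
    show "((\<lambda>x. E t * z t x) has_real_derivative E t * zy x) (at x)" if "x \<in> {0<..<l}" for x
      using z(2)[OF that] by (rule DERIV_cmult)
    show "((\<lambda>x. E t * zy x) has_real_derivative E t * zyy) (at y)"
      using z(3) by (rule DERIV_cmult)
    show "R (E' * z t y + E t * zt) (E t * zyy)"
      using assms(3)[OF z(4)] .
  qed
qed

lemma strict_subsolution_no_interior_max:
  assumes "classical_derivs z a b l t y (\<lambda>zt zyy. zt < k * zyy)" "k > 0"
    and "t \<in> {a<..b}" "y \<in> {0<..<l}"
    and "\<forall>s\<in>{a..b}. z s y \<le> z t y" "\<forall>x\<in>{0<..<l}. z t x \<le> z t y"
  shows False
proof -
  obtain zt zy zyy where z: "((\<lambda>s. z s y) has_real_derivative zt) (at t within {a..b})"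
    "\<And>x. x \<in> {0<..<l} \<Longrightarrow> ((\<lambda>x. z t x) has_real_derivative zy x) (at x)"
    "(zy has_real_derivative zyy) (at y)" "zt < k * zyy"
    using assms(1) by (rule classical_derivsE) auto
  have "zt \<ge> 0"
    using DERIV_nonneg_at_left_max[OF z(1)] assms(3,5) by auto
  moreover have "zyy \<le> 0"
    using DERIV2_nonpos_at_interior_max[OF _ _ z(2,3)] assms(4,6) by auto
  then have "k * zyy \<le> 0"
    using \<open>k > 0\<close> by (simp add: mult_nonneg_nonpos)
  ultimately show False
    using z(4) by linarith
qed

text \<open>The domain is not compact, since the bottom corners are missing; but a function that is
  nonpositive near those corners attains its positive supremum on the compact remainder.\<close>
lemma parabolic_domain_attains_positive_max:
  fixes z :: "real \<Rightarrow> real \<Rightarrow> real"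
  assumes cont: "continuous_on (parabolic_domain a b l) (\<lambda>p. z (fst p) (snd p))" and "r1 > 0" "r2 > 0"
    and corners: "\<forall>p\<in>parabolic_domain a b l.
                    fst p < a + r1 \<and> (snd p < r2 \<or> snd p > l - r2) \<longrightarrow> z (fst p) (snd p) \<le> 0"
    and p0: "p0 \<in> parabolic_domain a b l" "z (fst p0) (snd p0) > 0"
  obtains t y where "(t, y) \<in> parabolic_domain a b l" "z t y > 0"
    "\<forall>q\<in>parabolic_domain a b l. z (fst q) (snd q) \<le> z t y"
proof -
  define S where "S = ({a..b} \<times> {0..l}) \<inter>
    ({p. a + r1 \<le> fst p} \<union> ({p. r2 \<le> snd p} \<inter> {p. snd p \<le> l - r2}))"
  have "compact S"
    unfolding S_def
    by (intro compact_Int_closed compact_Times compact_Icc closed_Un closed_Int closed_Collect_le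
        continuous_intros)
  have S_sub: "S \<subseteq> parabolic_domain a b l"
    unfolding S_def parabolic_domain_def using assms(2,3) by (auto simp: mem_Times_iff)
  have outside_S: "z (fst q) (snd q) \<le> 0" if "q \<in> parabolic_domain a b l" "q \<notin> S" for q
    using that corners unfolding S_def parabolic_domain_def by (auto simp: mem_Times_iff)
  have "p0 \<in> S"
    using outside_S p0 by (meson not_less)
  then obtain p where p: "p \<in> S" "\<forall>q\<in>S. z (fst q) (snd q) \<le> z (fst p) (snd p)"
    using continuous_attains_sup[OF \<open>compact S\<close> _ continuous_on_subset[OF cont S_sub]] by blast
  have "z (fst p) (snd p) > 0"
    using p \<open>p0 \<in> S\<close> p0(2) by force
  moreover have "\<forall>q\<in>parabolic_domain a b l. z (fst q) (snd q) \<le> z (fst p) (snd p)"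
    using p outside_S \<open>z (fst p) (snd p) > 0\<close> by force
  ultimately show thesis
    using that[of "fst p" "snd p"] p(1) S_sub by auto
qed

lemma positive_max_in_parabolic_interior:
  fixes z :: "real \<Rightarrow> real \<Rightarrow> real"
  assumes "(t, y) \<in> parabolic_domain a b l" "z t y > 0"
    and max: "\<forall>q\<in>parabolic_domain a b l. z (fst q) (snd q) \<le> z t y"
    and initial: "\<And>x. x \<in> {0<..<l} \<Longrightarrow> (a, x) \<in> parabolic_domain a b l \<Longrightarrow> z a x \<le> 0"
    and boundary: "\<And>s. s \<in> {a<..b} \<Longrightarrow> z s 0 \<le> 0 \<and> z s l \<le> 0"
  shows "t \<in> {a<..b}" "y \<in> {0<..<l}"
    and "\<forall>s\<in>{a..b}. z s y \<le> z t y" "\<forall>x\<in>{0<..<l}. z t x \<le> z t y"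
proof -
  have "t \<noteq> a"
    using assms(1,2) initial[of y] unfolding parabolic_domain_def by fastforce
  then show t: "t \<in> {a<..b}"
    using assms(1) unfolding parabolic_domain_def by auto
  then have "y \<noteq> 0" "y \<noteq> l"
    using assms(2) boundary[OF t] by auto
  then show y: "y \<in> {0<..<l}"
    using assms(1) unfolding parabolic_domain_def by auto
  show "\<forall>s\<in>{a..b}. z s y \<le> z t y"
  proof
    fix s assume "s \<in> {a..b}"
    then have "(s, y) \<in> parabolic_domain a b l"
      using y unfolding parabolic_domain_def by auto
    then show "z s y \<le> z t y"
      using max[rule_format, of "(s, y)"] by simp
  qed
  show "\<forall>x\<in>{0<..<l}. z t x \<le> z t y"
  proof
    fix x assume "x \<in> {0<..<l}"
    then have "(t, x) \<in> parabolic_domain a b l"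
      using t unfolding parabolic_domain_def by auto
    then show "z t x \<le> z t y"
      using max[rule_format, of "(t, x)"] by simp
  qed
qed

lemma le_barrier_by_max_principle:
  fixes u h :: "real \<Rightarrow> real \<Rightarrow> real" and k :: "real \<Rightarrow> real"
  assumes "0 < l" "r1 > 0" "r2 > 0"
    and k_pos: "\<forall>t\<in>{a<..b}. k t > 0"
    and u_cont: "continuous_on (parabolic_domain a b l) (\<lambda>p. u (fst p) (snd p))"
    and h_cont: "continuous_on (parabolic_domain a b l) (\<lambda>p. h (fst p) (snd p))"
    and h_nonneg: "\<forall>p\<in>parabolic_domain a b l. h (fst p) (snd p) \<ge> 0"
    and u_initial: "\<forall>y\<in>{0<..<l}. u a y \<le> 0"
    and u_boundary: "\<forall>t\<in>{a<..b}. u t 0 \<le> 0 \<and> u t l \<le> 0"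
    and h_corners: "\<forall>p\<in>parabolic_domain a b l. fst p < a + r1 \<and> (snd p < r2 \<or> snd p > l - r2)
                      \<longrightarrow> u (fst p) (snd p) \<le> h (fst p) (snd p)"
    and u_sub: "\<forall>t\<in>{a<..b}. \<forall>y\<in>{0<..<l}. u t y > 0 \<longrightarrow>
                  classical_derivs u a b l t y (\<lambda>ut uyy. ut < k t * uyy)"
    and h_super: "\<forall>t\<in>{a<..b}. \<forall>y\<in>{0<..<l}.
                    classical_derivs h a b l t y (\<lambda>ht hyy. ht \<ge> k t * hyy)"
  shows "\<forall>p\<in>parabolic_domain a b l. u (fst p) (snd p) \<le> h (fst p) (snd p)"
proof (rule ccontr)
  assume "\<not> ?thesis"
  then obtain p0 where p0: "p0 \<in> parabolic_domain a b l" "u (fst p0) (snd p0) > h (fst p0) (snd p0)"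
    by force
  define z where "z t y = u t y - h t y" for t y
  have "continuous_on (parabolic_domain a b l) (\<lambda>p. z (fst p) (snd p))"
    unfolding z_def by (intro continuous_intros u_cont h_cont)
  moreover have "\<forall>p\<in>parabolic_domain a b l.
      fst p < a + r1 \<and> (snd p < r2 \<or> snd p > l - r2) \<longrightarrow> z (fst p) (snd p) \<le> 0"
    using h_corners unfolding z_def by simp
  moreover have "z (fst p0) (snd p0) > 0"
    using p0 unfolding z_def by simp
  ultimately obtain t y where ty: "(t, y) \<in> parabolic_domain a b l" "z t y > 0"
    and max: "\<forall>q\<in>parabolic_domain a b l. z (fst q) (snd q) \<le> z t y"
    using parabolic_domain_attains_positive_max[OF _ assms(2,3) _ p0(1)] by blast
  have z_initial: "z a x \<le> 0" if "x \<in> {0<..<l}" "(a, x) \<in> parabolic_domain a b l" for x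
    using u_initial[rule_format, OF that(1)] h_nonneg[rule_format, OF that(2)] unfolding z_def by simp
  have z_boundary: "z s 0 \<le> 0 \<and> z s l \<le> 0" if s: "s \<in> {a<..b}" for s
  proof -
    have "(s, 0) \<in> parabolic_domain a b l" "(s, l) \<in> parabolic_domain a b l"
      using s assms(1) unfolding parabolic_domain_def by auto
    then show ?thesis
      using u_boundary[rule_format, OF s] h_nonneg unfolding z_def by fastforce
  qed
  have t: "t \<in> {a<..b}" and y: "y \<in> {0<..<l}"
    and max_t: "\<forall>s\<in>{a..b}. z s y \<le> z t y" and max_y: "\<forall>x\<in>{0<..<l}. z t x \<le> z t y"
    using positive_max_in_parabolic_interior[OF ty max z_initial z_boundary] by auto
  have u_pos: "u t y > 0"
    using ty h_nonneg[rule_format, OF ty(1)] unfolding z_def by simp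
  have "classical_derivs z a b l t y (\<lambda>zt zyy. zt < k t * zyy)"
    unfolding z_def
    by (rule classical_derivs_diff[OF u_sub[rule_format, OF t y u_pos] h_super[rule_format, OF t y]])
       (simp add: right_diff_distrib)
  then show False
    using strict_subsolution_no_interior_max k_pos t y max_t max_y by blast
qed

section \<open>A heat-kernel barrier at the bottom corners\<close>

definition heat_kernel :: "real \<Rightarrow> real \<Rightarrow> real" where
  "heat_kernel \<sigma> y = exp (-(y\<^sup>2) / (4 * \<sigma>)) / sqrt \<sigma>"

lemma heat_kernel_has_derivative_space:
  "\<sigma> > 0 \<Longrightarrow> ((\<lambda>y. heat_kernel \<sigma> y) has_real_derivative -(y / (2 * \<sigma>)) * heat_kernel \<sigma> y) (at y)"
  unfolding heat_kernel_def
  by (rule derivative_eq_intros refl | simp)+ (simp add: field_simps power2_eq_square)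

lemma heat_kernel_has_second_derivative_space:
  "\<sigma> > 0 \<Longrightarrow> ((\<lambda>y. -(y / (2 * \<sigma>)) * heat_kernel \<sigma> y) has_real_derivative
     (y\<^sup>2 / (4 * \<sigma>\<^sup>2) - 1 / (2 * \<sigma>)) * heat_kernel \<sigma> y) (at y)"
  by (rule derivative_eq_intros refl heat_kernel_has_derivative_space | simp)+
     (simp add: field_simps power2_eq_square)

lemma heat_kernel_has_derivative_time:
  "\<sigma> > 0 \<Longrightarrow> ((\<lambda>\<sigma>. heat_kernel \<sigma> y) has_real_derivative
     (y\<^sup>2 / (4 * \<sigma>\<^sup>2) - 1 / (2 * \<sigma>)) * heat_kernel \<sigma> y) (at \<sigma>)"
  unfolding heat_kernel_def
  by (rule derivative_eq_intros refl | simp)+ (simp add: field_simps power2_eq_square)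

lemma heat_kernel_nonneg: "\<sigma> \<ge> 0 \<Longrightarrow> heat_kernel \<sigma> y \<ge> 0"
  unfolding heat_kernel_def by simp

lemma heat_kernel_le: "\<sigma> > 0 \<Longrightarrow> heat_kernel \<sigma> y \<le> 1 / sqrt \<sigma>"
  unfolding heat_kernel_def by (simp add: divide_right_mono)

lemma heat_kernel_ge:
  assumes "s > 0" "s \<le> \<sigma>" "\<sigma> \<le> 2 * s" "y\<^sup>2 \<le> s"
  shows "heat_kernel \<sigma> y \<ge> 3 / (8 * sqrt s)"
proof -
  have "y\<^sup>2 / (4 * \<sigma>) \<le> 1/4"
    using assms by (simp add: field_simps)
  then have exp_ge: "exp (-(y\<^sup>2) / (4 * \<sigma>)) \<ge> 3/4"
    using exp_ge_add_one_self[of "-(y\<^sup>2) / (4 * \<sigma>)"] by simp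
  have "sqrt \<sigma> \<le> sqrt (2 * s)"
    using assms by simp
  also have "\<dots> = sqrt 2 * sqrt s"
    by (rule real_sqrt_mult)
  also have "\<dots> \<le> 2 * sqrt s"
    using sqrt2_less_2 assms by simp
  finally have "(3/4) / (2 * sqrt s) \<le> (3/4) / sqrt \<sigma>"
    using assms by (intro divide_left_mono) auto
  also have "\<dots> \<le> heat_kernel \<sigma> y"
    unfolding heat_kernel_def using exp_ge assms by (intro divide_right_mono) auto
  finally show ?thesis
    by simp
qed

definition corner_barrier :: "real \<Rightarrow> real \<Rightarrow> real \<Rightarrow> real \<Rightarrow> real" where
  "corner_barrier A l \<sigma> y = A * (heat_kernel \<sigma> y + heat_kernel \<sigma> (l - y))"

lemma corner_barrier_nonneg: "A \<ge> 0 \<Longrightarrow> \<sigma> \<ge> 0 \<Longrightarrow> corner_barrier A l \<sigma> y \<ge> 0"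
  unfolding corner_barrier_def by (simp add: heat_kernel_nonneg)

lemma corner_barrier_le:
  assumes "A \<ge> 0" "0 < \<sigma>0" "\<sigma>0 \<le> \<sigma>"
  shows "corner_barrier A l \<sigma> y \<le> 2 * A / sqrt \<sigma>0"
proof -
  have "1 / sqrt \<sigma> \<le> 1 / sqrt \<sigma>0"
    using assms by (simp add: frac_le)
  then have hk: "heat_kernel \<sigma> x \<le> 1 / sqrt \<sigma>0" for x
    using heat_kernel_le[of \<sigma> x] assms by linarith
  have "heat_kernel \<sigma> y + heat_kernel \<sigma> (l - y) \<le> 2 / sqrt \<sigma>0"
    using hk[of y] hk[of "l - y"] by simp
  then have "A * (heat_kernel \<sigma> y + heat_kernel \<sigma> (l - y)) \<le> A * (2 / sqrt \<sigma>0)"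
    using assms(1) by (rule mult_left_mono)
  then show ?thesis
    unfolding corner_barrier_def by (simp add: mult.commute)
qed

lemma corner_barrier_ge:
  assumes "A \<ge> 0" "s > 0" "s \<le> \<sigma>" "\<sigma> \<le> 2 * s" "0 \<le> y" "y \<le> l"
    and "y < sqrt s \<or> y > l - sqrt s"
  shows "corner_barrier A l \<sigma> y \<ge> 3 * A / (8 * sqrt s)"
proof -
  have sq: "x\<^sup>2 \<le> s" if "0 \<le> x" "x < sqrt s" for x
  proof -
    have "x\<^sup>2 \<le> (sqrt s)\<^sup>2"
      using that by (intro power_mono) auto
    then show ?thesis
      using assms(2) by simp
  qed
  have "heat_kernel \<sigma> y \<ge> 3 / (8 * sqrt s) \<or> heat_kernel \<sigma> (l - y) \<ge> 3 / (8 * sqrt s)"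
    using assms(7) heat_kernel_ge[OF assms(2-4)] sq[of y] sq[of "l - y"] assms(5,6) by force
  moreover have "heat_kernel \<sigma> y \<ge> 0" "heat_kernel \<sigma> (l - y) \<ge> 0"
    using heat_kernel_nonneg assms(2,3) by auto
  ultimately have "3 / (8 * sqrt s) \<le> heat_kernel \<sigma> y + heat_kernel \<sigma> (l - y)"
    by linarith
  then have "A * (3 / (8 * sqrt s)) \<le> A * (heat_kernel \<sigma> y + heat_kernel \<sigma> (l - y))"
    using assms(1) by (rule mult_left_mono)
  then show ?thesis
    unfolding corner_barrier_def by simp
qed

lemma corner_barrier_classical_derivs:
  assumes \<sigma>_deriv: "(\<sigma> has_real_derivative k t) (at t within {a..b})" and "\<sigma> t > 0"
  shows "classical_derivs (\<lambda>t y. corner_barrier A l (\<sigma> t) y) a b l t y (\<lambda>ht hyy. ht = k t * hyy)"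
proof -
  define G2 where "G2 x = (x\<^sup>2 / (4 * (\<sigma> t)\<^sup>2) - 1 / (2 * \<sigma> t)) * heat_kernel (\<sigma> t) x" for x
  define Gy where "Gy x = -(x / (2 * \<sigma> t)) * heat_kernel (\<sigma> t) x" for x
  have time: "((\<lambda>s. heat_kernel (\<sigma> s) x) has_real_derivative G2 x * k t) (at t within {a..b})" for x
    unfolding G2_def using DERIV_chain2[OF heat_kernel_has_derivative_time[OF \<open>\<sigma> t > 0\<close>] \<sigma>_deriv] .
  have space: "((\<lambda>x. heat_kernel (\<sigma> t) x) has_real_derivative Gy z) (at z)" for z
    unfolding Gy_def using heat_kernel_has_derivative_space[OF \<open>\<sigma> t > 0\<close>] .
  have space2: "(Gy has_real_derivative G2 z) (at z)" for z
    unfolding Gy_def G2_def using heat_kernel_has_second_derivative_space[OF \<open>\<sigma> t > 0\<close>] .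
  have reflect: "((\<lambda>x. f (l - x)) has_real_derivative - f' (l - z)) (at z)"
    if "\<And>x. (f has_real_derivative f' x) (at x)" for f f' z
  proof -
    have "((\<lambda>x. f (l - x)) has_real_derivative f' (l - z) * (0 - 1)) (at z)"
      by (rule DERIV_chain2[OF that DERIV_diff[OF DERIV_const DERIV_ident]])
    then show ?thesis
      by simp
  qed
  have Dy: "((\<lambda>x. heat_kernel (\<sigma> t) x + heat_kernel (\<sigma> t) (l - x)) has_real_derivative
      Gy z - Gy (l - z)) (at z)" for z
    using DERIV_add[OF space reflect[OF space]] by (simp only: diff_conv_add_uminus)
  have Dyy: "((\<lambda>z. Gy z - Gy (l - z)) has_real_derivative G2 y + G2 (l - y)) (at y)"
    using DERIV_diff[OF space2 reflect[OF space2]] by (simp only: diff_minus_eq_add)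
  show ?thesis
    unfolding corner_barrier_def
  proof (rule classical_derivsI)
    show "((\<lambda>s. A * (heat_kernel (\<sigma> s) y + heat_kernel (\<sigma> s) (l - y))) has_real_derivative
        A * (G2 y * k t + G2 (l - y) * k t)) (at t within {a..b})"
      by (rule DERIV_cmult[OF DERIV_add[OF time time]])
    show "((\<lambda>x. A * (heat_kernel (\<sigma> t) x + heat_kernel (\<sigma> t) (l - x))) has_real_derivative
        A * (Gy z - Gy (l - z))) (at z)" for z
      by (rule DERIV_cmult[OF Dy])
    show "((\<lambda>z. A * (Gy z - Gy (l - z))) has_real_derivative A * (G2 y + G2 (l - y))) (at y)"
      by (rule DERIV_cmult[OF Dyy])
    show "A * (G2 y * k t + G2 (l - y) * k t) = k t * (A * (G2 y + G2 (l - y)))"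
      by (simp add: algebra_simps)
  qed
qed

lemma integral_pos_real:
  fixes f :: "real \<Rightarrow> real"
  assumes "continuous_on {a..b} f" "\<forall>x\<in>{a..b}. f x > 0" "a < b"
  shows "integral {a..b} f > 0"
  using integral_less_real[of a b "\<lambda>_. 0" f] assms by auto

lemma indefinite_integral_of_pos:
  fixes k :: "real \<Rightarrow> real"
  assumes k_cont: "continuous_on {a..b} k" and k_pos: "\<forall>t\<in>{a..b}. k t > 0"
  shows "continuous_on {a..b} (\<lambda>t. integral {a..t} k)"
    and "\<And>t. t \<in> {a..b} \<Longrightarrow> ((\<lambda>t. integral {a..t} k) has_real_derivative k t) (at t within {a..b})"
    and "\<And>t. t \<in> {a..b} \<Longrightarrow> integral {a..t} k \<ge> 0"
    and "\<And>t. t \<in> {a<..b} \<Longrightarrow> integral {a..t} k > 0"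
proof -
  show "continuous_on {a..b} (\<lambda>t. integral {a..t} k)"
    by (rule indefinite_integral_continuous_1[OF integrable_continuous_interval[OF k_cont]])
  show "((\<lambda>t. integral {a..t} k) has_real_derivative k t) (at t within {a..b})" if "t \<in> {a..b}" for t
    using integral_has_real_derivative[OF k_cont that] .
  show "integral {a..t} k \<ge> 0" if "t \<in> {a..b}" for t
    using that k_pos
    by (intro Henstock_Kurzweil_Integration.integral_nonneg integrable_continuous_interval
        continuous_on_subset[OF k_cont]) (auto intro: less_imp_le)
  show "integral {a..t} k > 0" if "t \<in> {a<..b}" for t
    using that k_pos by (intro integral_pos_real continuous_on_subset[OF k_cont]) auto
qed

lemma time_changed_corner_barrier:
  assumes \<theta>_cont: "continuous_on {a..b} \<theta>"
    and \<theta>_deriv: "\<And>t. t \<in> {a..b} \<Longrightarrow> (\<theta> has_real_derivative k t) (at t within {a..b})"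
    and \<theta>_nonneg: "\<And>t. t \<in> {a..b} \<Longrightarrow> \<theta> t \<ge> 0"
    and "s > 0" "A \<ge> 0"
  shows "continuous_on (parabolic_domain a b l) (\<lambda>p. corner_barrier A l (\<theta> (fst p) + s) (snd p))"
    and "\<forall>p\<in>parabolic_domain a b l. corner_barrier A l (\<theta> (fst p) + s) (snd p) \<ge> 0"
    and "\<forall>t\<in>{a<..b}. \<forall>y\<in>{0<..<l}.
           classical_derivs (\<lambda>t y. corner_barrier A l (\<theta> t + s) y) a b l t y (\<lambda>ht hyy. ht \<ge> k t * hyy)"
proof -
  have \<sigma>_pos: "\<theta> (fst p) + s > 0" if "p \<in> parabolic_domain a b l" for p
    using \<theta>_nonneg[of "fst p"] that \<open>s > 0\<close> unfolding parabolic_domain_def by (auto simp: mem_Times_iff)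
  have "continuous_on (parabolic_domain a b l) (\<lambda>p. \<theta> (fst p))"
    by (intro continuous_on_compose2[OF \<theta>_cont continuous_on_fst]) (auto simp: parabolic_domain_def)
  then show "continuous_on (parabolic_domain a b l) (\<lambda>p. corner_barrier A l (\<theta> (fst p) + s) (snd p))"
    unfolding corner_barrier_def heat_kernel_def
    using \<sigma>_pos by (intro continuous_intros) fastforce+
  show "\<forall>p\<in>parabolic_domain a b l. corner_barrier A l (\<theta> (fst p) + s) (snd p) \<ge> 0"
    using corner_barrier_nonneg[OF \<open>A \<ge> 0\<close>] \<sigma>_pos by (simp add: less_imp_le)
  show "\<forall>t\<in>{a<..b}. \<forall>y\<in>{0<..<l}.
      classical_derivs (\<lambda>t y. corner_barrier A l (\<theta> t + s) y) a b l t y (\<lambda>ht hyy. ht \<ge> k t * hyy)"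
  proof (intro ballI)
    fix t y assume "t \<in> {a<..b}" "y \<in> {0<..<l}"
    then have t: "t \<in> {a..b}"
      by simp
    have "((\<lambda>t. \<theta> t + s) has_real_derivative k t) (at t within {a..b})"
      using \<theta>_deriv[OF t] by (auto intro!: derivative_eq_intros)
    moreover have "\<theta> t + s > 0"
      using \<theta>_nonneg[OF t] \<open>s > 0\<close> by simp
    ultimately show "classical_derivs (\<lambda>t y. corner_barrier A l (\<theta> t + s) y) a b l t y
        (\<lambda>ht hyy. ht \<ge> k t * hyy)"
      by (rule classical_derivs_mono[OF corner_barrier_classical_derivs[of "\<lambda>t. \<theta> t + s" k t a b]]) simp
  qed
qed

text \<open>The heat kernels are evaluated at the time \<open>\<theta> t + s\<close> with \<open>\<theta>' = k\<close>. With \<open>s = r\<^sub>2\<^sup>2\<close>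
  and \<open>A = 4 B r\<^sub>2\<close> the barrier exceeds \<open>B\<close> near the bottom corners as long as \<open>\<theta> t < s\<close>,
  while at \<open>t\<^sub>0\<close> it is at most \<open>2 A / sqrt (\<theta> t\<^sub>0)\<close>, which the choice of \<open>r\<^sub>2\<close> makes at
  most \<open>\<eta>\<close>.\<close>
lemma corner_barrier_exists:
  fixes k :: "real \<Rightarrow> real"
  assumes "a < b" and k_cont: "continuous_on {a..b} k" and k_pos: "\<forall>t\<in>{a..b}. k t > 0"
    and "B \<ge> 0" and t0: "a < t0" "t0 \<le> b" and "\<eta> > 0"
  obtains h r1 r2 where "r1 > 0" "r2 > 0"
    "continuous_on (parabolic_domain a b l) (\<lambda>p. h (fst p) (snd p))"
    "\<forall>p\<in>parabolic_domain a b l. h (fst p) (snd p) \<ge> 0"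
    "\<forall>p\<in>parabolic_domain a b l. fst p < a + r1 \<and> (snd p < r2 \<or> snd p > l - r2)
       \<longrightarrow> B \<le> h (fst p) (snd p)"
    "\<forall>y. h t0 y \<le> \<eta>"
    "\<forall>t\<in>{a<..b}. \<forall>y\<in>{0<..<l}. classical_derivs h a b l t y (\<lambda>ht hyy. ht \<ge> k t * hyy)"
proof -
  define \<theta> where "\<theta> t = integral {a..t} k" for t
  note \<theta> = indefinite_integral_of_pos[OF k_cont k_pos, folded \<theta>_def]
  have "\<theta> t0 > 0"
    using \<theta>(4) t0 by simp
  define r2 where "r2 = \<eta> * sqrt (\<theta> t0) / (8 * (B + 1))"
  have "r2 > 0"
    unfolding r2_def using \<open>\<eta> > 0\<close> \<open>\<theta> t0 > 0\<close> \<open>B \<ge> 0\<close> by simp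
  define s where "s = r2\<^sup>2"
  have s: "s > 0" "sqrt s = r2"
    unfolding s_def using \<open>r2 > 0\<close> by auto
  obtain r1 where "r1 > 0" and r1: "\<forall>t\<in>{a..b}. dist t a < r1 \<longrightarrow> dist (\<theta> t) (\<theta> a) < s"
    using \<theta>(1) \<open>a < b\<close> s(1) unfolding continuous_on_iff by fastforce
  define A where "A = 4 * B * r2"
  have "A \<ge> 0"
    unfolding A_def using \<open>B \<ge> 0\<close> \<open>r2 > 0\<close> by simp
  define h where "h = (\<lambda>t y. corner_barrier A l (\<theta> t + s) y)"
  have corners: "\<forall>p\<in>parabolic_domain a b l. fst p < a + r1 \<and> (snd p < r2 \<or> snd p > l - r2)
       \<longrightarrow> B \<le> h (fst p) (snd p)"
  proof (intro ballI impI)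
    fix p assume p: "p \<in> parabolic_domain a b l" "fst p < a + r1 \<and> (snd p < r2 \<or> snd p > l - r2)"
    then have t: "fst p \<in> {a..b}" and y: "snd p \<in> {0..l}"
      unfolding parabolic_domain_def by auto
    have "dist (\<theta> (fst p)) (\<theta> a) < s"
      using r1[rule_format, OF t] p(2) t by (simp add: dist_real_def)
    then have "\<theta> (fst p) < s"
      unfolding \<theta>_def by simp
    then have "3 * A / (8 * sqrt s) \<le> h (fst p) (snd p)"
      unfolding h_def using p(2) s y \<theta>(3)[OF t] \<open>A \<ge> 0\<close> by (intro corner_barrier_ge) auto
    moreover have "3 * A / (8 * sqrt s) = 3 * B / 2"
      unfolding A_def s(2) using \<open>r2 > 0\<close> by simp
    ultimately show "B \<le> h (fst p) (snd p)"
      using \<open>B \<ge> 0\<close> by linarith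
  qed
  have at_t0: "\<forall>y. h t0 y \<le> \<eta>"
  proof
    fix y
    have "h t0 y \<le> 2 * A / sqrt (\<theta> t0)"
      unfolding h_def using \<open>A \<ge> 0\<close> \<open>\<theta> t0 > 0\<close> s by (intro corner_barrier_le) auto
    also have "\<dots> = 8 * B * \<eta> / (8 * (B + 1))"
      unfolding A_def r2_def using \<open>\<theta> t0 > 0\<close> by simp
    also have "\<dots> \<le> \<eta>"
      using \<open>B \<ge> 0\<close> \<open>\<eta> > 0\<close> by (simp add: field_simps)
    finally show "h t0 y \<le> \<eta>" .
  qed
  show thesis
    using time_changed_corner_barrier[OF \<theta>(1-3) s(1) \<open>A \<ge> 0\<close>, of l]
      corners at_t0 by (intro that[where h = h, OF \<open>r1 > 0\<close> \<open>r2 > 0\<close>]) (simp_all add: h_def)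
qed

lemma strict_max_principle:
  fixes u :: "real \<Rightarrow> real \<Rightarrow> real" and k :: "real \<Rightarrow> real"
  assumes "a < b" "0 < l" and k_cont: "continuous_on {a..b} k" and k_pos: "\<forall>t\<in>{a..b}. k t > 0"
    and u_cont: "continuous_on (parabolic_domain a b l) (\<lambda>p. u (fst p) (snd p))"
    and u_bounded: "\<forall>p\<in>parabolic_domain a b l. u (fst p) (snd p) \<le> B"
    and u_initial: "\<forall>y\<in>{0<..<l}. u a y \<le> 0"
    and u_boundary: "\<forall>t\<in>{a<..b}. u t 0 \<le> 0 \<and> u t l \<le> 0"
    and u_sub: "\<forall>t\<in>{a<..b}. \<forall>y\<in>{0<..<l}. u t y > 0 \<longrightarrow>
                  classical_derivs u a b l t y (\<lambda>ut uyy. ut < k t * uyy)"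
  shows "\<forall>p\<in>parabolic_domain a b l. u (fst p) (snd p) \<le> 0"
proof (rule ccontr)
  assume "\<not> ?thesis"
  then obtain t0 y0 where p0: "(t0, y0) \<in> parabolic_domain a b l" "u t0 y0 > 0"
    by force
  have "t0 \<noteq> a"
    using p0 u_initial unfolding parabolic_domain_def by fastforce
  then have t0: "a < t0" "t0 \<le> b"
    using p0 unfolding parabolic_domain_def by auto
  define \<eta> where "\<eta> = u t0 y0 / 2"
  have "\<eta> > 0"
    unfolding \<eta>_def using p0 by simp
  obtain h r1 r2 where "r1 > 0" "r2 > 0"
    and h_cont: "continuous_on (parabolic_domain a b l) (\<lambda>p. h (fst p) (snd p))"
    and h_nonneg: "\<forall>p\<in>parabolic_domain a b l. h (fst p) (snd p) \<ge> 0"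
    and h_corners: "\<forall>p\<in>parabolic_domain a b l. fst p < a + r1 \<and> (snd p < r2 \<or> snd p > l - r2)
                     \<longrightarrow> max B 0 \<le> h (fst p) (snd p)"
    and h_t0: "\<forall>y. h t0 y \<le> \<eta>"
    and h_super: "\<forall>t\<in>{a<..b}. \<forall>y\<in>{0<..<l}. classical_derivs h a b l t y (\<lambda>ht hyy. ht \<ge> k t * hyy)"
    by (rule corner_barrier_exists[where B = "max B 0" and l = l, OF \<open>a < b\<close> k_cont k_pos _ t0 \<open>\<eta> > 0\<close>])
      auto
  have "\<forall>p\<in>parabolic_domain a b l. u (fst p) (snd p) \<le> h (fst p) (snd p)"
  proof (rule le_barrier_by_max_principle[OF \<open>0 < l\<close> \<open>r1 > 0\<close> \<open>r2 > 0\<close> _ u_cont h_cont h_nonneg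
        u_initial u_boundary _ u_sub h_super])
    show "\<forall>t\<in>{a<..b}. k t > 0"
      using k_pos by auto
    show "\<forall>p\<in>parabolic_domain a b l. fst p < a + r1 \<and> (snd p < r2 \<or> snd p > l - r2)
        \<longrightarrow> u (fst p) (snd p) \<le> h (fst p) (snd p)"
      using h_corners u_bounded by fastforce
  qed
  then have "u t0 y0 \<le> h t0 y0"
    using p0(1) by fastforce
  then have "u t0 y0 \<le> \<eta>"
    using h_t0 order_trans by blast
  then show False
    using \<open>\<eta> > 0\<close> unfolding \<eta>_def by simp
qed

text \<open>The factor \<open>exp (-(C + 1) (t - a))\<close> removes the zero-order term \<open>C z\<close> and makes the
  inequality strict wherever \<open>z > 0\<close>.\<close>
lemma exp_rescaled_strict_subsolution:
  assumes "classical_derivs z a b l t y (\<lambda>zt zyy. zt \<le> k * zyy + C * z t y)" "z t y > 0"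
  shows "classical_derivs (\<lambda>t y. exp (-(C + 1) * (t - a)) * z t y) a b l t y (\<lambda>ut uyy. ut < k * uyy)"
proof -
  define E where "E t = exp (-(C + 1) * (t - a))" for t
  have "E t > 0"
    unfolding E_def by simp
  have "(E has_real_derivative -(C + 1) * E t) (at t within {a..b})"
    unfolding E_def by (auto intro!: derivative_eq_intros)
  then show ?thesis
    unfolding E_def[symmetric]
  proof (rule classical_derivs_scale_time[OF assms(1)])
    fix zt zyy assume "zt \<le> k * zyy + C * z t y"
    then have "-(C + 1) * E t * z t y + E t * zt \<le> -(C + 1) * E t * z t y + E t * (k * zyy + C * z t y)"
      using \<open>E t > 0\<close> by simp
    also have "\<dots> = k * (E t * zyy) - E t * z t y"
      by (simp add: algebra_simps)
    also have "\<dots> < k * (E t * zyy)"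
      using \<open>E t > 0\<close> \<open>z t y > 0\<close> by simp
    finally show "-(C + 1) * E t * z t y + E t * zt < k * (E t * zyy)" .
  qed
qed

lemma weak_max_principle:
  fixes z :: "real \<Rightarrow> real \<Rightarrow> real" and k :: "real \<Rightarrow> real"
  assumes "a < b" "0 < l" and k_cont: "continuous_on {a..b} k" and k_pos: "\<forall>t\<in>{a..b}. k t > 0"
    and "C \<ge> 0"
    and z_cont: "continuous_on (parabolic_domain a b l) (\<lambda>p. z (fst p) (snd p))"
    and z_bounded: "\<forall>p\<in>parabolic_domain a b l. z (fst p) (snd p) \<le> B"
    and z_initial: "\<forall>y\<in>{0<..<l}. z a y \<le> 0"
    and z_boundary: "\<forall>t\<in>{a<..b}. z t 0 \<le> 0 \<and> z t l \<le> 0"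
    and z_sub: "\<forall>t\<in>{a<..b}. \<forall>y\<in>{0<..<l}. z t y > 0 \<longrightarrow>
                  classical_derivs z a b l t y (\<lambda>zt zyy. zt \<le> k t * zyy + C * z t y)"
  shows "\<forall>p\<in>parabolic_domain a b l. z (fst p) (snd p) \<le> 0"
proof -
  define E where "E t = exp (-(C + 1) * (t - a))" for t
  define u where "u t y = E t * z t y" for t y
  have E_pos: "E t > 0" for t
    unfolding E_def by simp
  have u_pos_iff: "u t y > 0 \<longleftrightarrow> z t y > 0" for t y
    unfolding u_def using E_pos[of t] by (simp add: zero_less_mult_iff)
  have u_nonpos_iff: "u t y \<le> 0 \<longleftrightarrow> z t y \<le> 0" for t y
    using u_pos_iff[of t y] by linarith
  have "\<forall>p\<in>parabolic_domain a b l. u (fst p) (snd p) \<le> 0"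
  proof (rule strict_max_principle[OF \<open>a < b\<close> \<open>0 < l\<close> k_cont k_pos])
    show "continuous_on (parabolic_domain a b l) (\<lambda>p. u (fst p) (snd p))"
      unfolding u_def E_def by (intro continuous_intros z_cont)
    show "\<forall>p\<in>parabolic_domain a b l. u (fst p) (snd p) \<le> max B 0"
    proof
      fix p assume p: "p \<in> parabolic_domain a b l"
      then have "E (fst p) \<le> 1"
        unfolding E_def parabolic_domain_def using \<open>C \<ge> 0\<close> by (auto simp: mult_nonpos_nonneg)
      then have "u (fst p) (snd p) \<le> max (z (fst p) (snd p)) 0"
        using E_pos[of "fst p"] unfolding u_def
        by (cases "z (fst p) (snd p) \<ge> 0") (auto simp: mult_left_le_one_le mult_nonneg_nonpos)
      then show "u (fst p) (snd p) \<le> max B 0"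
        using z_bounded p by fastforce
    qed
    show "\<forall>y\<in>{0<..<l}. u a y \<le> 0" "\<forall>t\<in>{a<..b}. u t 0 \<le> 0 \<and> u t l \<le> 0"
      using z_initial z_boundary u_nonpos_iff by blast+
    show "\<forall>t\<in>{a<..b}. \<forall>y\<in>{0<..<l}. u t y > 0 \<longrightarrow>
        classical_derivs u a b l t y (\<lambda>ut uyy. ut < k t * uyy)"
    proof (intro ballI impI)
      fix t y assume t: "t \<in> {a<..b}" and y: "y \<in> {0<..<l}" and "u t y > 0"
      then have "z t y > 0"
        using u_pos_iff by blast
      show "classical_derivs u a b l t y (\<lambda>ut uyy. ut < k t * uyy)"
        unfolding u_def E_def
        by (rule exp_rescaled_strict_subsolution[OF z_sub[rule_format, OF t y \<open>z t y > 0\<close>] \<open>z t y > 0\<close>])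
    qed
  qed
  then show ?thesis
    using u_nonpos_iff by blast
qed

section \<open>Comparison with a separable solution\<close>

lemma piece_solutionD:
  assumes "piece_solution d \<alpha> \<gamma> \<rho> \<rho>' a b l u0 w"
  shows "continuous_on (parabolic_domain a b l) (\<lambda>p. w (fst p) (snd p))"
    and "bounded ((\<lambda>p. w (fst p) (snd p)) ` parabolic_domain a b l)"
    and "\<forall>y\<in>{0<..<l}. w a y = u0 y"
    and "\<forall>t\<in>{a<..b}. w t 0 = 0 \<and> w t l = 0"
    and "\<forall>t\<in>{a<..b}. \<forall>y\<in>{0<..<l}. classical_derivs w a b l t y
           (\<lambda>wt wyy. wt = d / (\<rho> t)\<^sup>2 * wyy + (\<alpha> - \<rho>' t / \<rho> t) * w t y - \<gamma> * (w t y)\<^sup>2)"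
  using assms unfolding piece_solution_def parabolic_domain_def classical_derivs_def by auto

lemma bounded_parabolic_domainE:
  fixes w :: "real \<Rightarrow> real \<Rightarrow> real"
  assumes "bounded ((\<lambda>p. w (fst p) (snd p)) ` parabolic_domain a b l)"
  obtains B where "B \<ge> 0" "\<forall>p\<in>parabolic_domain a b l. \<bar>w (fst p) (snd p)\<bar> \<le> B"
proof -
  obtain B where "\<forall>x\<in>(\<lambda>p. w (fst p) (snd p)) ` parabolic_domain a b l. norm x \<le> B"
    using assms unfolding bounded_iff by blast
  then have "\<forall>p\<in>parabolic_domain a b l. \<bar>w (fst p) (snd p)\<bar> \<le> B"
    by simp
  then show thesis
    using that[of "max B 0"] by fastforce
qed

lemma cos_centered_ge:
  assumes "0 \<le> \<mu>" "\<mu> * l < pi" "y \<in> {0..l}"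
  shows "cos (\<mu> * (l/2)) \<le> cos (\<mu> * (y - l/2))"
proof -
  have "\<bar>y - l/2\<bar> \<le> l/2"
    using assms(3) by (intro abs_leI) auto
  then have "\<mu> * \<bar>y - l/2\<bar> \<le> \<mu> * (l/2)"
    using assms(1) by (rule mult_left_mono)
  then have "\<bar>\<mu> * (y - l/2)\<bar> \<le> \<mu> * (l/2)"
    using assms(1) by (simp add: abs_mult)
  then have "cos (\<mu> * (l/2)) \<le> cos \<bar>\<mu> * (y - l/2)\<bar>"
    using assms by (intro cos_monotone_0_pi_le) auto
  then show ?thesis
    by simp
qed

lemma cos_half_pos:
  assumes "0 \<le> \<mu>" "0 \<le> l" "\<mu> * l < pi"
  shows "cos (\<mu> * (l/2)) > 0"
proof -
  have "0 \<le> \<mu> * l"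
    using assms by simp
  then show ?thesis
    using assms(3) pi_gt_zero by (intro cos_gt_zero_pi) linarith+
qed

lemma le_cos_multiple:
  fixes v0 :: "real \<Rightarrow> real"
  assumes "continuous_on {0..l} v0" "0 \<le> l" "0 < \<mu>" "\<mu> * l < pi"
  obtains m where "m \<ge> 0" "\<forall>y\<in>{0..l}. v0 y \<le> m * cos (\<mu> * (y - l/2))"
proof -
  have "{0..l} \<noteq> {}"
    using assms(2) by simp
  then obtain y0 where v0_max: "\<forall>y\<in>{0..l}. v0 y \<le> v0 y0"
    using continuous_attains_sup[OF compact_Icc _ assms(1)] by blast
  have cos_pos: "cos (\<mu> * (l/2)) > 0"
    using cos_half_pos assms by simp
  define m where "m = \<bar>v0 y0\<bar> / cos (\<mu> * (l/2))"
  have "v0 y \<le> m * cos (\<mu> * (y - l/2))" if "y \<in> {0..l}" for y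
  proof -
    have "v0 y \<le> m * cos (\<mu> * (l/2))"
      unfolding m_def using v0_max that cos_pos by fastforce
    also have "\<dots> \<le> m * cos (\<mu> * (y - l/2))"
      unfolding m_def using cos_centered_ge[of \<mu> l y] that assms cos_pos
      by (intro mult_left_mono) auto
    finally show ?thesis .
  qed
  moreover have "m \<ge> 0"
    unfolding m_def using cos_pos by simp
  ultimately show thesis
    using that by blast
qed

text \<open>The separable solution of the linearised equation
  \<open>v\<^sub>t = d / \<rho>\<^sup>2 v\<^sub>y\<^sub>y + (\<alpha> - \<rho>' / \<rho>) v\<close> that equals \<open>cos (\<mu> (y - l/2))\<close> at time \<open>a\<close>.\<close>
definition separable_solution ::
  "real \<Rightarrow> real \<Rightarrow> (real \<Rightarrow> real) \<Rightarrow> real \<Rightarrow> real \<Rightarrow> real \<Rightarrow> real \<Rightarrow> real \<Rightarrow> real" where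
  "separable_solution d \<alpha> \<rho> \<mu> l a t y =
     \<rho> a / \<rho> t * exp (\<alpha> * (t - a) - d * \<mu>\<^sup>2 * integral {a..t} (\<lambda>s. 1 / (\<rho> s)\<^sup>2)) * cos (\<mu> * (y - l/2))"

locale rd_coefficients =
  fixes d \<alpha> \<gamma> :: real and \<rho> \<rho>' :: "real \<Rightarrow> real"
  assumes d_pos: "d > 0" and \<gamma>_pos: "\<gamma> > 0"
    and \<rho>_pos: "\<And>t. \<rho> t > 0"
    and \<rho>_deriv: "\<And>t. (\<rho> has_real_derivative \<rho>' t) (at t)"
    and \<rho>'_cont: "continuous_on UNIV \<rho>'"
begin

lemma \<rho>_cont: "continuous_on S \<rho>"
  using \<rho>_deriv DERIV_isCont continuous_at_imp_continuous_on by blast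

lemma \<rho>_nonzero: "\<rho> t \<noteq> 0"
  using \<rho>_pos[of t] by simp

lemma inverse_square_cont: "continuous_on S (\<lambda>t. 1 / (\<rho> t)\<^sup>2)"
  by (intro continuous_intros \<rho>_cont) (simp add: \<rho>_nonzero)

lemma diffusivity_cont: "continuous_on S (\<lambda>t. d / (\<rho> t)\<^sup>2)"
  by (intro continuous_intros \<rho>_cont) (simp add: \<rho>_nonzero)

lemma diffusivity_pos: "d / (\<rho> t)\<^sup>2 > 0"
  using d_pos \<rho>_nonzero by simp

lemma growth_rate_bounded:
  assumes "a \<le> b"
  obtains C where "C \<ge> 0" "\<And>t. t \<in> {a..b} \<Longrightarrow> \<alpha> - \<rho>' t / \<rho> t \<le> C"
proof -
  have "continuous_on {a..b} (\<lambda>t. \<bar>\<alpha> - \<rho>' t / \<rho> t\<bar>)"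
    by (intro continuous_intros \<rho>_cont continuous_on_subset[OF \<rho>'_cont]) (auto simp: \<rho>_nonzero)
  moreover have "{a..b} \<noteq> {}"
    using assms by simp
  ultimately obtain t where max: "\<forall>s\<in>{a..b}. \<bar>\<alpha> - \<rho>' s / \<rho> s\<bar> \<le> \<bar>\<alpha> - \<rho>' t / \<rho> t\<bar>"
    using continuous_attains_sup[OF compact_Icc] by blast
  have "\<alpha> - \<rho>' s / \<rho> s \<le> \<bar>\<alpha> - \<rho>' t / \<rho> t\<bar>" if "s \<in> {a..b}" for s
    using max[rule_format, OF that] abs_ge_self[of "\<alpha> - \<rho>' s / \<rho> s"] by linarith
  then show thesis
    using that[of "\<bar>\<alpha> - \<rho>' t / \<rho> t\<bar>"] by simp
qed

lemma separable_solution_has_derivative_time: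
  assumes "t \<in> {a..b}"
  shows "((\<lambda>s. separable_solution d \<alpha> \<rho> \<mu> l a s y) has_real_derivative
    (\<alpha> - d * \<mu>\<^sup>2 / (\<rho> t)\<^sup>2 - \<rho>' t / \<rho> t) * separable_solution d \<alpha> \<rho> \<mu> l a t y) (at t within {a..b})"
proof -
  define E where "E s = \<alpha> * (s - a) - d * \<mu>\<^sup>2 * integral {a..s} (\<lambda>s. 1 / (\<rho> s)\<^sup>2)" for s
  have "(E has_real_derivative \<alpha> * 1 - d * \<mu>\<^sup>2 * (1 / (\<rho> t)\<^sup>2)) (at t within {a..b})"
    unfolding E_def
    by (intro DERIV_diff DERIV_cmult integral_has_real_derivative[OF inverse_square_cont assms])
       (auto intro!: derivative_eq_intros)
  from DERIV_mult[OF DERIV_divide[OF DERIV_const has_field_derivative_at_within[OF \<rho>_deriv] \<rho>_nonzero]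
      DERIV_chain2[OF DERIV_exp this], of "\<rho> a"]
  have deriv: "((\<lambda>s. \<rho> a / \<rho> s * exp (E s)) has_real_derivative
      (0 * \<rho> t - \<rho> a * \<rho>' t) / (\<rho> t * \<rho> t) * exp (E t)
      + exp (E t) * (\<alpha> * 1 - d * \<mu>\<^sup>2 * (1 / (\<rho> t)\<^sup>2)) * (\<rho> a / \<rho> t)) (at t within {a..b})" .
  have value_eq: "(0 * \<rho> t - \<rho> a * \<rho>' t) / (\<rho> t * \<rho> t) * exp (E t)
      + exp (E t) * (\<alpha> * 1 - d * \<mu>\<^sup>2 * (1 / (\<rho> t)\<^sup>2)) * (\<rho> a / \<rho> t)
      = (\<alpha> - d * \<mu>\<^sup>2 / (\<rho> t)\<^sup>2 - \<rho>' t / \<rho> t) * (\<rho> a / \<rho> t * exp (E t))"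
    using \<rho>_nonzero[of t] by (simp add: field_simps power2_eq_square)
  have "((\<lambda>s. \<rho> a / \<rho> s * exp (E s) * cos (\<mu> * (y - l/2))) has_real_derivative
      (\<alpha> - d * \<mu>\<^sup>2 / (\<rho> t)\<^sup>2 - \<rho>' t / \<rho> t) * (\<rho> a / \<rho> t * exp (E t)) * cos (\<mu> * (y - l/2)))
      (at t within {a..b})"
    by (rule DERIV_cmult_right[OF deriv[unfolded value_eq]])
  then show ?thesis
    unfolding separable_solution_def E_def[symmetric] by (simp only: mult.assoc)
qed

lemma separable_solution_classical_derivs:
  assumes "t \<in> {a..b}"
  shows "classical_derivs (\<lambda>t y. M * separable_solution d \<alpha> \<rho> \<mu> l a t y) a b l t y
    (\<lambda>vt vyy. vt = d / (\<rho> t)\<^sup>2 * vyy + (\<alpha> - \<rho>' t / \<rho> t) * (M * separable_solution d \<alpha> \<rho> \<mu> l a t y))"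
proof -
  define Q where "Q = \<rho> a / \<rho> t * exp (\<alpha> * (t - a) - d * \<mu>\<^sup>2 * integral {a..t} (\<lambda>s. 1 / (\<rho> s)\<^sup>2))"
  define e where "e = separable_solution d \<alpha> \<rho> \<mu> l a t y"
  have time: "((\<lambda>s. M * separable_solution d \<alpha> \<rho> \<mu> l a s y) has_real_derivative
      M * ((\<alpha> - d * \<mu>\<^sup>2 / (\<rho> t)\<^sup>2 - \<rho>' t / \<rho> t) * e)) (at t within {a..b})"
    unfolding e_def by (rule DERIV_cmult[OF separable_solution_has_derivative_time[OF assms]])
  have space: "((\<lambda>x. M * separable_solution d \<alpha> \<rho> \<mu> l a t x) has_real_derivative
      M * Q * (- \<mu> * sin (\<mu> * (z - l/2)))) (at z)" for z
    unfolding separable_solution_def Q_def[symmetric] by (auto intro!: derivative_eq_intros)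
  have space2: "((\<lambda>z. M * Q * (- \<mu> * sin (\<mu> * (z - l/2)))) has_real_derivative
      M * Q * (- \<mu>\<^sup>2 * cos (\<mu> * (y - l/2)))) (at y)"
    by (auto intro!: derivative_eq_intros simp: power2_eq_square)
  have vyy_eq: "M * Q * (- \<mu>\<^sup>2 * cos (\<mu> * (y - l/2))) = - \<mu>\<^sup>2 * (M * e)"
    unfolding e_def separable_solution_def Q_def by simp
  have pde_eq: "M * ((\<alpha> - d * \<mu>\<^sup>2 / (\<rho> t)\<^sup>2 - \<rho>' t / \<rho> t) * e)
      = d / (\<rho> t)\<^sup>2 * (- \<mu>\<^sup>2 * (M * e)) + (\<alpha> - \<rho>' t / \<rho> t) * (M * e)"
    by (simp add: algebra_simps)
  show ?thesis
  proof (rule classical_derivsI)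
    show "((\<lambda>s. M * separable_solution d \<alpha> \<rho> \<mu> l a s y) has_real_derivative
        M * ((\<alpha> - d * \<mu>\<^sup>2 / (\<rho> t)\<^sup>2 - \<rho>' t / \<rho> t) * e)) (at t within {a..b})"
      by (rule time)
    show "((\<lambda>x. M * separable_solution d \<alpha> \<rho> \<mu> l a t x) has_real_derivative
        M * Q * (- \<mu> * sin (\<mu> * (z - l/2)))) (at z)" for z
      by (rule space)
    show "((\<lambda>z. M * Q * (- \<mu> * sin (\<mu> * (z - l/2)))) has_real_derivative
        M * Q * (- \<mu>\<^sup>2 * cos (\<mu> * (y - l/2)))) (at y)"
      by (rule space2)
    show "M * ((\<alpha> - d * \<mu>\<^sup>2 / (\<rho> t)\<^sup>2 - \<rho>' t / \<rho> t) * e) = d / (\<rho> t)\<^sup>2 *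
        (M * Q * (- \<mu>\<^sup>2 * cos (\<mu> * (y - l/2)))) + (\<alpha> - \<rho>' t / \<rho> t) * (M * separable_solution d \<alpha> \<rho> \<mu> l a t y)"
      unfolding vyy_eq e_def[symmetric] by (rule pde_eq)
  qed
qed

lemma separable_solution_nonneg:
  assumes "0 \<le> \<mu>" "\<mu> * l < pi" "y \<in> {0..l}"
  shows "separable_solution d \<alpha> \<rho> \<mu> l a t y \<ge> 0"
proof -
  have "0 < cos (\<mu> * (y - l/2))"
    using cos_half_pos[of \<mu> l] cos_centered_ge[OF assms] assms by auto
  then show ?thesis
    unfolding separable_solution_def using \<rho>_pos[of a] \<rho>_pos[of t] by simp
qed

lemma separable_solution_initial: "separable_solution d \<alpha> \<rho> \<mu> l a a y = cos (\<mu> * (y - l/2))"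
  unfolding separable_solution_def using \<rho>_nonzero[of a] by simp

lemma separable_solution_cont:
  "continuous_on (parabolic_domain a b l) (\<lambda>p. separable_solution d \<alpha> \<rho> \<mu> l a (fst p) (snd p))"
proof -
  have "continuous_on {a..b} (\<lambda>t. integral {a..t} (\<lambda>s. 1 / (\<rho> s)\<^sup>2))"
    by (intro indefinite_integral_continuous_1 integrable_continuous_interval inverse_square_cont)
  then have "continuous_on (parabolic_domain a b l) (\<lambda>p. integral {a..fst p} (\<lambda>s. 1 / (\<rho> s)\<^sup>2))"
    by (rule continuous_on_compose2[OF _ continuous_on_fst]) (auto simp: parabolic_domain_def)
  then show ?thesis
    unfolding separable_solution_def
    by (intro continuous_intros continuous_on_compose2[OF \<rho>_cont continuous_on_fst]) (auto simp: \<rho>_nonzero)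
qed

lemma separable_solution_le:
  assumes "t \<in> {a..b}"
  shows "separable_solution d \<alpha> \<rho> \<mu> l a t y \<le> \<rho> a / \<rho> t * exp (\<bar>\<alpha>\<bar> * (b - a))"
proof -
  have "integral {a..t} (\<lambda>s. 1 / (\<rho> s)\<^sup>2) \<ge> 0"
    by (intro Henstock_Kurzweil_Integration.integral_nonneg integrable_continuous_interval
        inverse_square_cont) simp
  then have "d * \<mu>\<^sup>2 * integral {a..t} (\<lambda>s. 1 / (\<rho> s)\<^sup>2) \<ge> 0"
    using d_pos by simp
  moreover have "\<alpha> * (t - a) \<le> \<bar>\<alpha>\<bar> * (t - a)"
    using assms by (intro mult_right_mono) auto
  moreover have "\<bar>\<alpha>\<bar> * (t - a) \<le> \<bar>\<alpha>\<bar> * (b - a)"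
    using assms by (intro mult_left_mono) auto
  ultimately have E_le: "exp (\<alpha> * (t - a) - d * \<mu>\<^sup>2 * integral {a..t} (\<lambda>s. 1 / (\<rho> s)\<^sup>2))
      \<le> exp (\<bar>\<alpha>\<bar> * (b - a))"
    by simp
  have ratio_pos: "0 < \<rho> a / \<rho> t"
    using \<rho>_pos[of a] \<rho>_pos[of t] by simp
  have "separable_solution d \<alpha> \<rho> \<mu> l a t y
      \<le> \<rho> a / \<rho> t * exp (\<alpha> * (t - a) - d * \<mu>\<^sup>2 * integral {a..t} (\<lambda>s. 1 / (\<rho> s)\<^sup>2)) * 1"
    unfolding separable_solution_def using ratio_pos by (intro mult_left_mono mult_nonneg_nonneg) auto
  also have "\<dots> \<le> \<rho> a / \<rho> t * exp (\<bar>\<alpha>\<bar> * (b - a))"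
    using mult_left_mono[OF E_le less_imp_le[OF ratio_pos]] by simp
  finally show ?thesis .
qed

lemma negative_part_subsolution:
  assumes w: "classical_derivs w a b l t y
      (\<lambda>wt wyy. wt = d / (\<rho> t)\<^sup>2 * wyy + (\<alpha> - \<rho>' t / \<rho> t) * w t y - \<gamma> * (w t y)\<^sup>2)"
    and "\<alpha> - \<rho>' t / \<rho> t \<le> C" and neg: "- w t y > 0" "- w t y \<le> B"
  shows "classical_derivs (\<lambda>t y. - w t y) a b l t y
    (\<lambda>zt zyy. zt \<le> d / (\<rho> t)\<^sup>2 * zyy + (C + \<gamma> * B) * (- w t y))"
proof (rule classical_derivs_uminus[OF w])
  have c_le: "(\<alpha> - \<rho>' t / \<rho> t) * (- w t y) \<le> C * (- w t y)"
    using assms(2) neg(1) by (intro mult_right_mono) auto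
  have "(- w t y) * (- w t y) \<le> B * (- w t y)"
    using neg by (intro mult_right_mono) auto
  then have "\<gamma> * ((- w t y) * (- w t y)) \<le> \<gamma> * (B * (- w t y))"
    using \<gamma>_pos by (intro mult_left_mono) auto
  then have quad_le: "\<gamma> * (w t y)\<^sup>2 \<le> \<gamma> * B * (- w t y)"
    by (simp add: power2_eq_square mult.assoc)
  fix wt wyy assume "wt = d / (\<rho> t)\<^sup>2 * wyy + (\<alpha> - \<rho>' t / \<rho> t) * w t y - \<gamma> * (w t y)\<^sup>2"
  then have "- wt = d / (\<rho> t)\<^sup>2 * (- wyy) + (\<alpha> - \<rho>' t / \<rho> t) * (- w t y) + \<gamma> * (w t y)\<^sup>2"
    by simp
  moreover have "(C + \<gamma> * B) * (- w t y) = C * (- w t y) + \<gamma> * B * (- w t y)"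
    by (simp add: algebra_simps)
  ultimately show "- wt \<le> d / (\<rho> t)\<^sup>2 * (- wyy) + (C + \<gamma> * B) * (- w t y)"
    using c_le quad_le by linarith
qed

lemma piece_solution_nonneg:
  assumes "a < b" "0 < l" and sol: "piece_solution d \<alpha> \<gamma> \<rho> \<rho>' a b l u0 w"
    and u0_nonneg: "\<forall>y\<in>{0<..<l}. u0 y \<ge> 0"
  shows "\<forall>p\<in>parabolic_domain a b l. w (fst p) (snd p) \<ge> 0"
proof -
  note w = piece_solutionD[OF sol]
  obtain C where "C \<ge> 0" and C: "\<And>t. t \<in> {a..b} \<Longrightarrow> \<alpha> - \<rho>' t / \<rho> t \<le> C"
    using growth_rate_bounded[of a b] \<open>a < b\<close> by auto
  obtain B where "B \<ge> 0" and B: "\<forall>p\<in>parabolic_domain a b l. \<bar>w (fst p) (snd p)\<bar> \<le> B"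
    using bounded_parabolic_domainE[OF w(2)] by blast
  have "\<forall>p\<in>parabolic_domain a b l. - w (fst p) (snd p) \<le> 0"
  proof (rule weak_max_principle[where z = "\<lambda>t y. - w t y" and C = "C + \<gamma> * B" and B = B,
        OF assms(1,2) diffusivity_cont])
    show "\<forall>t\<in>{a..b}. d / (\<rho> t)\<^sup>2 > 0"
      using diffusivity_pos by blast
    show "0 \<le> C + \<gamma> * B"
      using \<open>C \<ge> 0\<close> \<open>B \<ge> 0\<close> \<gamma>_pos by simp
    show "continuous_on (parabolic_domain a b l) (\<lambda>p. - w (fst p) (snd p))"
      by (intro continuous_intros w(1))
    show "\<forall>p\<in>parabolic_domain a b l. - w (fst p) (snd p) \<le> B"
      using B by (auto simp: abs_le_iff)
    show "\<forall>y\<in>{0<..<l}. - w a y \<le> 0" "\<forall>t\<in>{a<..b}. - w t 0 \<le> 0 \<and> - w t l \<le> 0"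
      using w(3,4) u0_nonneg by simp_all
    show "\<forall>t\<in>{a<..b}. \<forall>y\<in>{0<..<l}. - w t y > 0 \<longrightarrow> classical_derivs (\<lambda>t y. - w t y) a b l t y
        (\<lambda>zt zyy. zt \<le> d / (\<rho> t)\<^sup>2 * zyy + (C + \<gamma> * B) * (- w t y))"
    proof (intro ballI impI)
      fix t y assume t: "t \<in> {a<..b}" and y: "y \<in> {0<..<l}" and neg: "- w t y > 0"
      have "(t, y) \<in> parabolic_domain a b l"
        using t y unfolding parabolic_domain_def by auto
      then have "- w t y \<le> B"
        using B by fastforce
      with t neg show "classical_derivs (\<lambda>t y. - w t y) a b l t y
          (\<lambda>zt zyy. zt \<le> d / (\<rho> t)\<^sup>2 * zyy + (C + \<gamma> * B) * (- w t y))"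
        by (intro negative_part_subsolution[OF w(5)[rule_format, OF t y]] C) auto
    qed
  qed
  then show ?thesis
    by auto
qed

lemma excess_over_separable_solution_subsolution:
  assumes w: "classical_derivs w a b l t y
      (\<lambda>wt wyy. wt = d / (\<rho> t)\<^sup>2 * wyy + (\<alpha> - \<rho>' t / \<rho> t) * w t y - \<gamma> * (w t y)\<^sup>2)"
    and "t \<in> {a..b}" "\<alpha> - \<rho>' t / \<rho> t \<le> C"
    and pos: "w t y - M * separable_solution d \<alpha> \<rho> \<mu> l a t y > 0"
  shows "classical_derivs (\<lambda>t y. w t y - M * separable_solution d \<alpha> \<rho> \<mu> l a t y) a b l t y
    (\<lambda>zt zyy. zt \<le> d / (\<rho> t)\<^sup>2 * zyy + C * (w t y - M * separable_solution d \<alpha> \<rho> \<mu> l a t y))"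
proof (rule classical_derivs_diff[OF w separable_solution_classical_derivs[OF \<open>t \<in> {a..b}\<close>]])
  have c_le: "(\<alpha> - \<rho>' t / \<rho> t) * (w t y - M * separable_solution d \<alpha> \<rho> \<mu> l a t y)
      \<le> C * (w t y - M * separable_solution d \<alpha> \<rho> \<mu> l a t y)"
    using assms(3) pos by (intro mult_right_mono) auto
  have "\<gamma> * (w t y)\<^sup>2 \<ge> 0"
    using \<gamma>_pos by simp
  fix wt wyy vt vyy
  assume wt: "wt = d / (\<rho> t)\<^sup>2 * wyy + (\<alpha> - \<rho>' t / \<rho> t) * w t y - \<gamma> * (w t y)\<^sup>2"
    and vt: "vt = d / (\<rho> t)\<^sup>2 * vyy + (\<alpha> - \<rho>' t / \<rho> t) * (M * separable_solution d \<alpha> \<rho> \<mu> l a t y)"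
  have "wt - vt = d / (\<rho> t)\<^sup>2 * (wyy - vyy)
      + (\<alpha> - \<rho>' t / \<rho> t) * (w t y - M * separable_solution d \<alpha> \<rho> \<mu> l a t y) - \<gamma> * (w t y)\<^sup>2"
    unfolding wt vt by (simp add: algebra_simps diff_divide_distrib)
  then show "wt - vt \<le> d / (\<rho> t)\<^sup>2 * (wyy - vyy) + C * (w t y - M * separable_solution d \<alpha> \<rho> \<mu> l a t y)"
    using c_le \<open>\<gamma> * (w t y)\<^sup>2 \<ge> 0\<close> by linarith
qed

lemma piece_solution_le_separable_solution:
  assumes "a < b" "0 < l" and sol: "piece_solution d \<alpha> \<gamma> \<rho> \<rho>' a b l u0 w"
    and "0 < \<mu>" "\<mu> * l < pi" "M \<ge> 0"
    and u0_le: "\<forall>y\<in>{0<..<l}. u0 y \<le> M * cos (\<mu> * (y - l/2))"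
  shows "\<forall>p\<in>parabolic_domain a b l. w (fst p) (snd p) \<le> M * separable_solution d \<alpha> \<rho> \<mu> l a (fst p) (snd p)"
proof -
  note w = piece_solutionD[OF sol]
  define \<Psi> where "\<Psi> t y = M * separable_solution d \<alpha> \<rho> \<mu> l a t y" for t y
  have \<Psi>_nonneg: "\<Psi> t y \<ge> 0" if "y \<in> {0..l}" for t y
    unfolding \<Psi>_def using separable_solution_nonneg[of \<mu> l y] assms(4-6) that by simp
  obtain C where "C \<ge> 0" and C: "\<And>t. t \<in> {a..b} \<Longrightarrow> \<alpha> - \<rho>' t / \<rho> t \<le> C"
    using growth_rate_bounded[of a b] \<open>a < b\<close> by auto
  obtain B where "B \<ge> 0" and B: "\<forall>p\<in>parabolic_domain a b l. \<bar>w (fst p) (snd p)\<bar> \<le> B"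
    using bounded_parabolic_domainE[OF w(2)] by blast
  have "\<forall>p\<in>parabolic_domain a b l. w (fst p) (snd p) - \<Psi> (fst p) (snd p) \<le> 0"
  proof (rule weak_max_principle[where z = "\<lambda>t y. w t y - \<Psi> t y" and C = C and B = B,
        OF assms(1,2) diffusivity_cont _ \<open>C \<ge> 0\<close>])
    show "\<forall>t\<in>{a..b}. d / (\<rho> t)\<^sup>2 > 0"
      using diffusivity_pos by blast
    show "continuous_on (parabolic_domain a b l) (\<lambda>p. w (fst p) (snd p) - \<Psi> (fst p) (snd p))"
      unfolding \<Psi>_def by (intro continuous_intros w(1) separable_solution_cont)
    show "\<forall>p\<in>parabolic_domain a b l. w (fst p) (snd p) - \<Psi> (fst p) (snd p) \<le> B"
    proof
      fix p assume p: "p \<in> parabolic_domain a b l"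
      then have "\<Psi> (fst p) (snd p) \<ge> 0"
        using \<Psi>_nonneg unfolding parabolic_domain_def by auto
      moreover have "w (fst p) (snd p) \<le> B"
        using B[rule_format, OF p] by (simp add: abs_le_iff)
      ultimately show "w (fst p) (snd p) - \<Psi> (fst p) (snd p) \<le> B"
        by linarith
    qed
    show "\<forall>y\<in>{0<..<l}. w a y - \<Psi> a y \<le> 0"
      using w(3) u0_le unfolding \<Psi>_def separable_solution_initial by simp
    show "\<forall>t\<in>{a<..b}. w t 0 - \<Psi> t 0 \<le> 0 \<and> w t l - \<Psi> t l \<le> 0"
      using w(4) \<Psi>_nonneg \<open>0 < l\<close> by simp
    show "\<forall>t\<in>{a<..b}. \<forall>y\<in>{0<..<l}. w t y - \<Psi> t y > 0 \<longrightarrow> classical_derivs (\<lambda>t y. w t y - \<Psi> t y)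
        a b l t y (\<lambda>zt zyy. zt \<le> d / (\<rho> t)\<^sup>2 * zyy + C * (w t y - \<Psi> t y))"
      unfolding \<Psi>_def using w(5)
      by (intro ballI impI excess_over_separable_solution_subsolution C) auto
  qed
  then show ?thesis
    unfolding \<Psi>_def by auto
qed

end

section \<open>Geometric decay over the periods\<close>

lemma ratio_tendsto_deriv_at_right:
  fixes g :: "real \<Rightarrow> real"
  assumes "(g has_real_derivative \<kappa>) (at 0 within {0..})" "g 0 = 0"
  shows "((\<lambda>u. g u / u) \<longlongrightarrow> \<kappa>) (at_right 0)"
proof -
  have "((\<lambda>u. (g u - g 0) / (u - 0)) \<longlongrightarrow> \<kappa>) (at 0 within {0..})"
    using assms(1) unfolding has_field_derivative_iff .
  then show ?thesis
    using assms(2) by (simp add: at_within_Ici_at_right)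
qed

lemma le_deriv_mult_of_ratio_antimono:
  fixes g :: "real \<Rightarrow> real"
  assumes "(g has_real_derivative \<kappa>) (at 0 within {0..})" "g 0 = 0"
    and ratio_antimono: "\<forall>u1 u2. 0 < u1 \<and> u1 \<le> u2 \<longrightarrow> g u2 / u2 \<le> g u1 / u1"
    and "u \<ge> 0"
  shows "g u \<le> \<kappa> * u"
proof (cases "u = 0")
  case True
  then show ?thesis
    using assms(2) by simp
next
  case False
  then have "u > 0"
    using \<open>u \<ge> 0\<close> by simp
  have "eventually (\<lambda>x. g u / u \<le> g x / x) (at_right 0)"
    using eventually_at_right_real[OF \<open>u > 0\<close>] by (rule eventually_mono) (use ratio_antimono in auto)
  then have "g u / u \<le> \<kappa>"
    by (rule tendsto_lowerbound[OF ratio_tendsto_deriv_at_right[OF assms(1,2)]]) simp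
  then show ?thesis
    using \<open>u > 0\<close> by (simp add: field_simps)
qed

lemma deriv_le_one_of_ratio_lt_one:
  fixes g :: "real \<Rightarrow> real"
  assumes "(g has_real_derivative \<kappa>) (at 0 within {0..})" "g 0 = 0"
    and "\<forall>u>0. g u / u < 1"
  shows "\<kappa> \<le> 1"
proof -
  have "eventually (\<lambda>x. g x / x \<le> 1) (at_right (0::real))"
    using eventually_at_right_real[of 0 1] by (rule eventually_mono) (use assms(3) in \<open>auto intro: less_imp_le\<close>)
  then show ?thesis
    by (rule tendsto_upperbound[OF ratio_tendsto_deriv_at_right[OF assms(1,2)]]) simp
qed

text \<open>\<open>R\<^sub>0 < 1\<close> says \<open>\<alpha> T + ln \<kappa> < d (\<pi>/l)\<^sup>2 I\<close>; any \<open>\<mu>\<^sup>2\<close> strictly between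
  \<open>(\<alpha> T + ln \<kappa>) / (d I)\<close> and \<open>(\<pi>/l)\<^sup>2\<close> works.\<close>
lemma exists_decay_frequency:
  fixes d T l I \<kappa> \<alpha> :: real
  assumes "d > 0" "T > 0" "l > 0" "I > 0" "0 < \<kappa>" "\<kappa> \<le> 1"
    and R0: "\<alpha> / (d * (pi / l)\<^sup>2 / T * I - 1 / T * ln \<kappa>) < 1"
  obtains \<mu> where "0 < \<mu>" "\<mu> * l < pi" "\<kappa> * exp (\<alpha> * T - d * \<mu>\<^sup>2 * I) < 1"
proof -
  define m where "m = (\<alpha> * T + ln \<kappa>) / (d * I)"
  have "ln \<kappa> \<le> 0"
    using assms(5,6) by simp
  then have "1 / T * ln \<kappa> \<le> 0"
    using assms(2) by (simp add: divide_nonpos_pos)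
  moreover have "0 < d * (pi / l)\<^sup>2 / T * I"
    using assms(1-4) by simp
  ultimately have "0 < d * (pi / l)\<^sup>2 / T * I - 1 / T * ln \<kappa>"
    by linarith
  then have "\<alpha> * T < (d * (pi / l)\<^sup>2 / T * I - 1 / T * ln \<kappa>) * T"
    using R0 assms(2) by (simp add: divide_less_eq)
  moreover have "(d * (pi / l)\<^sup>2 / T * I - 1 / T * ln \<kappa>) * T = d * (pi / l)\<^sup>2 * I - ln \<kappa>"
    using assms(2) by (simp add: field_simps)
  ultimately have "\<alpha> * T + ln \<kappa> < (pi / l)\<^sup>2 * (d * I)"
    by (simp add: mult_ac)
  then have "m < (pi / l)\<^sup>2"
    unfolding m_def using assms(1,4) by (simp add: pos_divide_less_eq)
  define \<mu> where "\<mu> = sqrt (((pi / l)\<^sup>2 + max m 0) / 2)"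
  have \<mu>2: "m < \<mu>\<^sup>2" "\<mu>\<^sup>2 < (pi / l)\<^sup>2" "0 < \<mu>\<^sup>2"
    unfolding \<mu>_def using \<open>m < (pi / l)\<^sup>2\<close> assms(3) by (auto simp: max_def)
  have "0 < \<mu>"
    unfolding \<mu>_def using \<mu>2 assms(3) by (simp add: add_pos_nonneg)
  have "\<mu> < pi / l"
    using \<mu>2(2) \<open>0 < \<mu>\<close> assms(3) by (simp add: power_less_imp_less_base)
  then have "\<mu> * l < pi"
    using assms(3) by (simp add: field_simps)
  have "\<alpha> * T + ln \<kappa> < \<mu>\<^sup>2 * (d * I)"
    using \<mu>2(1) assms(1,4) unfolding m_def by (simp add: pos_divide_less_eq)
  moreover have "\<kappa> * exp (\<alpha> * T - d * \<mu>\<^sup>2 * I) = exp (\<alpha> * T + ln \<kappa> - \<mu>\<^sup>2 * (d * I))"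
    using assms(5) by (simp add: exp_add exp_diff mult_ac)
  ultimately have "\<kappa> * exp (\<alpha> * T - d * \<mu>\<^sup>2 * I) < 1"
    by simp
  then show thesis
    using that \<open>0 < \<mu>\<close> \<open>\<mu> * l < pi\<close> by blast
qed

lemma periodic_nat_multiple:
  assumes "\<And>t. f (t + T) = f t"
  shows "f (t + real n * T) = f t"
proof (induction n)
  case (Suc n)
  have "f (t + real (Suc n) * T) = f ((t + real n * T) + T)"
    by (simp add: algebra_simps)
  then show ?case
    using Suc assms by simp
qed simp

lemma integral_periodic_shift:
  fixes f :: "real \<Rightarrow> real"
  assumes "\<And>t. f (t + T) = f t"
  shows "integral {real n * T..real n * T + T} f = integral {0..T} f"
proof -
  have "f \<circ> (+) (real n * T) = f"
    using periodic_nat_multiple[of f T] assms by (auto simp: add.commute)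
  then show ?thesis
    using integral_shift_Icc_real[of 0 T f "real n * T"] by (simp add: add.commute)
qed

lemma uniformly_tendsto_zero_of_geometric_bound:
  fixes v :: "real \<Rightarrow> 'a \<Rightarrow> real"
  assumes "T > 0" "0 \<le> q" "q < 1"
    and bound: "\<And>n t y. t \<in> {real n * T<..real (Suc n) * T} \<Longrightarrow> y \<in> Y \<Longrightarrow> \<bar>v t y\<bar> \<le> K * q ^ n"
  shows "\<forall>\<epsilon>>0. \<exists>t0. \<forall>t\<ge>t0. \<forall>y\<in>Y. \<bar>v t y\<bar> < \<epsilon>"
proof (intro allI impI)
  fix \<epsilon> :: real assume "\<epsilon> > 0"
  obtain N where N: "q ^ N < \<epsilon> / (\<bar>K\<bar> + 1)"
    using real_arch_pow_inv[of "\<epsilon> / (\<bar>K\<bar> + 1)" q] \<open>\<epsilon> > 0\<close> assms(2,3) by fastforce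
  show "\<exists>t0. \<forall>t\<ge>t0. \<forall>y\<in>Y. \<bar>v t y\<bar> < \<epsilon>"
  proof (intro exI allI impI ballI)
    fix t y assume t: "real (Suc N) * T \<le> t" and "y \<in> Y"
    define n where "n = nat \<lceil>t / T\<rceil> - 1"
    have "real (Suc N) \<le> t / T"
      using t \<open>T > 0\<close> by (simp add: field_simps)
    then have "N \<le> n" "real n = of_int \<lceil>t / T\<rceil> - 1"
      unfolding n_def by linarith+
    then have "real n < t / T" "t / T \<le> real (Suc n)"
      using ceiling_correct[of "t / T"] by auto
    then have "t \<in> {real n * T<..real (Suc n) * T}"
      using \<open>T > 0\<close> by (simp add: pos_less_divide_eq pos_divide_le_eq)
    then have "\<bar>v t y\<bar> \<le> K * q ^ n"
      using bound \<open>y \<in> Y\<close> by blast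
    also have "\<dots> \<le> \<bar>K\<bar> * q ^ N"
      using \<open>N \<le> n\<close> assms(2,3) by (intro mult_mono power_decreasing) auto
    also have "\<dots> \<le> (\<bar>K\<bar> + 1) * q ^ N"
      using assms(2) by (intro mult_right_mono) auto
    also have "\<dots> < \<epsilon>"
      using N by (simp add: field_simps)
    finally show "\<bar>v t y\<bar> < \<epsilon>" .
  qed
qed

lemma impulsive_solutionE:
  assumes "impulsive_solution d \<alpha> \<gamma> \<rho> \<rho>' g T l v0 v"
  obtains w where "piece_solution d \<alpha> \<gamma> \<rho> \<rho>' (real n * T) (real n * T + T) l (\<lambda>y. g (v (real n * T) y)) w"
    and "\<forall>t\<in>{real n * T<..real n * T + T}. \<forall>y\<in>{0..l}. v t y = w t y"
proof -
  have "real (Suc n) * T = real n * T + T"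
    by (simp add: algebra_simps)
  then show thesis
    using assms that unfolding impulsive_solution_def by metis
qed

locale periodic_rd_coefficients = rd_coefficients +
  fixes T :: real
  assumes T_pos: "T > 0" and \<rho>_periodic: "\<And>t. \<rho> (t + T) = \<rho> t" and \<rho>_0: "\<rho> 0 = 1"
begin

definition decay_factor :: "real \<Rightarrow> real \<Rightarrow> real" where
  "decay_factor \<kappa> \<mu> = \<kappa> * exp (\<alpha> * T - d * \<mu>\<^sup>2 * integral {0..T} (\<lambda>t. 1 / (\<rho> t)\<^sup>2))"

lemma \<rho>_period_start: "\<rho> (real n * T) = 1"
  using periodic_nat_multiple[of \<rho> T 0 n] \<rho>_periodic \<rho>_0 by simp

lemma \<rho>_lower_bound:
  obtains r where "r > 0" "\<And>t. t \<ge> 0 \<Longrightarrow> r \<le> \<rho> t"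
proof -
  have "{0..T} \<noteq> {}"
    using T_pos by simp
  then obtain s where s: "\<forall>t\<in>{0..T}. \<rho> s \<le> \<rho> t"
    using continuous_attains_inf[OF compact_Icc _ \<rho>_cont] by blast
  have "\<rho> s \<le> \<rho> t" if "t \<ge> 0" for t
  proof -
    define n where "n = nat \<lfloor>t / T\<rfloor>"
    have "0 \<le> \<lfloor>t / T\<rfloor>"
      using that T_pos by simp
    then have "real n = of_int \<lfloor>t / T\<rfloor>"
      unfolding n_def by simp
    then have "real n \<le> t / T" "t / T < real n + 1"
      using floor_correct[of "t / T"] by auto
    then have "real n * T \<le> t" "t < (real n + 1) * T"
      using T_pos by (simp_all add: pos_le_divide_eq pos_divide_less_eq)
    then have "real n * T \<le> t" "t < real n * T + T"
      by (simp_all add: algebra_simps)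
    then have "\<rho> s \<le> \<rho> (t - real n * T)"
      using s[rule_format, of "t - real n * T"] by simp
    also have "\<dots> = \<rho> t"
      using periodic_nat_multiple[of \<rho> T "t - real n * T" n] \<rho>_periodic by simp
    finally show ?thesis .
  qed
  then show thesis
    using that[of "\<rho> s"] \<rho>_pos by blast
qed

lemma separable_solution_after_period:
  "\<kappa> * separable_solution d \<alpha> \<rho> \<mu> l (real n * T) (real n * T + T) y = decay_factor \<kappa> \<mu> * cos (\<mu> * (y - l/2))"
proof -
  have "integral {real n * T..real n * T + T} (\<lambda>t. 1 / (\<rho> t)\<^sup>2) = integral {0..T} (\<lambda>t. 1 / (\<rho> t)\<^sup>2)"
    using \<rho>_periodic by (intro integral_periodic_shift) simp
  moreover have "\<rho> (real n * T + T) = \<rho> (real n * T)"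
    using \<rho>_periodic by simp
  ultimately show ?thesis
    unfolding separable_solution_def decay_factor_def using \<rho>_nonzero by simp
qed

lemma impulsive_solution_period_bound:
  assumes "l > 0" and g_bounds: "\<And>u. u \<ge> 0 \<Longrightarrow> 0 \<le> g u \<and> g u \<le> \<kappa> * u"
    and "0 < \<mu>" "\<mu> * l < pi" "m \<ge> 0"
    and sol: "impulsive_solution d \<alpha> \<gamma> \<rho> \<rho>' g T l v0 v"
    and start: "\<forall>y\<in>{0..l}. 0 \<le> v (real n * T) y \<and> v (real n * T) y \<le> m * cos (\<mu> * (y - l/2))"
  shows "\<forall>t\<in>{real n * T<..real n * T + T}. \<forall>y\<in>{0..l}.
           0 \<le> v t y \<and> v t y \<le> (\<kappa> * m) * separable_solution d \<alpha> \<rho> \<mu> l (real n * T) t y"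
proof -
  define a where "a = real n * T"
  obtain w where w: "piece_solution d \<alpha> \<gamma> \<rho> \<rho>' a (a + T) l (\<lambda>y. g (v a y)) w"
    and agree: "\<forall>t\<in>{a<..a + T}. \<forall>y\<in>{0..l}. v t y = w t y"
    unfolding a_def by (rule impulsive_solutionE[OF sol])
  have "\<kappa> \<ge> 0"
    using g_bounds[of 1] by simp
  have u0: "\<forall>y\<in>{0<..<l}. 0 \<le> g (v a y) \<and> g (v a y) \<le> (\<kappa> * m) * cos (\<mu> * (y - l/2))"
  proof
    fix y :: real assume "y \<in> {0<..<l}"
    then have v: "0 \<le> v a y" "v a y \<le> m * cos (\<mu> * (y - l/2))"
      using start unfolding a_def by auto
    have "g (v a y) \<le> \<kappa> * v a y"
      using g_bounds v(1) by blast
    also have "\<dots> \<le> \<kappa> * (m * cos (\<mu> * (y - l/2)))"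
      using v(2) \<open>\<kappa> \<ge> 0\<close> by (rule mult_left_mono)
    finally show "0 \<le> g (v a y) \<and> g (v a y) \<le> (\<kappa> * m) * cos (\<mu> * (y - l/2))"
      using g_bounds[of "v a y"] v by (simp add: mult.assoc)
  qed
  have "a < a + T"
    using T_pos by simp
  have "\<forall>p\<in>parabolic_domain a (a + T) l. 0 \<le> w (fst p) (snd p)"
    using u0 by (intro piece_solution_nonneg[OF \<open>a < a + T\<close> \<open>l > 0\<close> w]) auto
  moreover have "\<forall>p\<in>parabolic_domain a (a + T) l.
      w (fst p) (snd p) \<le> (\<kappa> * m) * separable_solution d \<alpha> \<rho> \<mu> l a (fst p) (snd p)"
    using u0 \<open>\<kappa> \<ge> 0\<close> \<open>m \<ge> 0\<close>
    by (intro piece_solution_le_separable_solution[OF \<open>a < a + T\<close> \<open>l > 0\<close> w \<open>0 < \<mu>\<close> \<open>\<mu> * l < pi\<close>]) auto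
  moreover have "(t, y) \<in> parabolic_domain a (a + T) l" if "t \<in> {a<..a + T}" "y \<in> {0..l}" for t y
    using that unfolding parabolic_domain_def by auto
  ultimately show ?thesis
    using agree unfolding a_def[symmetric] by fastforce
qed

lemma impulsive_solution_period_start_bound:
  assumes "l > 0" and g_bounds: "\<And>u. u \<ge> 0 \<Longrightarrow> 0 \<le> g u \<and> g u \<le> \<kappa> * u"
    and "0 < \<mu>" "\<mu> * l < pi" "m \<ge> 0"
    and sol: "impulsive_solution d \<alpha> \<gamma> \<rho> \<rho>' g T l v0 v"
    and v0_bound: "\<forall>y\<in>{0..l}. 0 \<le> v0 y \<and> v0 y \<le> m * cos (\<mu> * (y - l/2))"
  shows "\<forall>y\<in>{0..l}. 0 \<le> v (real n * T) y \<and>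
           v (real n * T) y \<le> m * decay_factor \<kappa> \<mu> ^ n * cos (\<mu> * (y - l/2))"
proof (induction n)
  case 0
  then show ?case
    using sol v0_bound unfolding impulsive_solution_def by simp
next
  case (Suc n)
  have "\<kappa> \<ge> 0"
    using g_bounds[of 1] by simp
  then have "0 \<le> m * decay_factor \<kappa> \<mu> ^ n"
    unfolding decay_factor_def using \<open>m \<ge> 0\<close> by simp
  from impulsive_solution_period_bound[OF \<open>l > 0\<close> g_bounds \<open>0 < \<mu>\<close> \<open>\<mu> * l < pi\<close> this sol Suc]
  have v: "\<forall>y\<in>{0..l}. 0 \<le> v (real n * T + T) y \<and> v (real n * T + T) y
      \<le> (\<kappa> * (m * decay_factor \<kappa> \<mu> ^ n)) * separable_solution d \<alpha> \<rho> \<mu> l (real n * T) (real n * T + T) y"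
    using T_pos by simp
  have after: "(\<kappa> * (m * decay_factor \<kappa> \<mu> ^ n)) * separable_solution d \<alpha> \<rho> \<mu> l (real n * T) (real n * T + T) y
      = m * decay_factor \<kappa> \<mu> ^ Suc n * cos (\<mu> * (y - l/2))" for y
  proof -
    have "(\<kappa> * (m * decay_factor \<kappa> \<mu> ^ n)) * separable_solution d \<alpha> \<rho> \<mu> l (real n * T) (real n * T + T) y
        = (m * decay_factor \<kappa> \<mu> ^ n) * (\<kappa> * separable_solution d \<alpha> \<rho> \<mu> l (real n * T) (real n * T + T) y)"
      by (simp add: mult_ac)
    also have "\<dots> = m * decay_factor \<kappa> \<mu> ^ Suc n * cos (\<mu> * (y - l/2))"
      unfolding separable_solution_after_period by (simp add: mult_ac)
    finally show ?thesis .
  qed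
  have "real (Suc n) * T = real n * T + T"
    by (simp add: algebra_simps)
  then show ?case
    using v unfolding after by simp
qed

lemma impulsive_solution_geometric_decay:
  assumes "l > 0" and g_bounds: "\<And>u. u \<ge> 0 \<Longrightarrow> 0 \<le> g u \<and> g u \<le> \<kappa> * u"
    and "0 < \<mu>" "\<mu> * l < pi"
    and v0_cont: "continuous_on {0..l} v0" and v0_nonneg: "\<forall>y\<in>{0..l}. v0 y \<ge> 0"
    and sol: "impulsive_solution d \<alpha> \<gamma> \<rho> \<rho>' g T l v0 v"
  obtains K where "\<And>n t y. t \<in> {real n * T<..real (Suc n) * T} \<Longrightarrow> y \<in> {0..l} \<Longrightarrow>
    0 \<le> v t y \<and> v t y \<le> K * decay_factor \<kappa> \<mu> ^ n"
proof -
  have "\<kappa> \<ge> 0"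
    using g_bounds[of 1] by simp
  obtain m where "m \<ge> 0" and m: "\<forall>y\<in>{0..l}. v0 y \<le> m * cos (\<mu> * (y - l/2))"
    using le_cos_multiple[OF v0_cont] \<open>l > 0\<close> \<open>0 < \<mu>\<close> \<open>\<mu> * l < pi\<close> by auto
  obtain r where "r > 0" and r: "\<And>t. t \<ge> 0 \<Longrightarrow> r \<le> \<rho> t"
    using \<rho>_lower_bound by blast
  show thesis
  proof (rule that[of "\<kappa> * m * exp (\<bar>\<alpha>\<bar> * T) / r"])
    fix n t y assume t: "t \<in> {real n * T<..real (Suc n) * T}" and y: "y \<in> {0..l}"
    define M where "M = \<kappa> * (m * decay_factor \<kappa> \<mu> ^ n)"
    have "M \<ge> 0"
      unfolding M_def decay_factor_def using \<open>m \<ge> 0\<close> \<open>\<kappa> \<ge> 0\<close> by simp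
    have "t \<in> {real n * T<..real n * T + T}"
      using t by (simp add: algebra_simps)
    then have v: "0 \<le> v t y" "v t y \<le> M * separable_solution d \<alpha> \<rho> \<mu> l (real n * T) t y"
      using impulsive_solution_period_bound[OF \<open>l > 0\<close> g_bounds \<open>0 < \<mu>\<close> \<open>\<mu> * l < pi\<close> _ sol
          impulsive_solution_period_start_bound[OF \<open>l > 0\<close> g_bounds \<open>0 < \<mu>\<close> \<open>\<mu> * l < pi\<close> \<open>m \<ge> 0\<close> sol]]
        y v0_nonneg m \<open>m \<ge> 0\<close> \<open>\<kappa> \<ge> 0\<close> unfolding M_def decay_factor_def by auto
    have "0 \<le> real n * T"
      using T_pos by simp
    then have "1 / \<rho> t \<le> 1 / r"
      using r[of t] t \<open>r > 0\<close> by (simp add: frac_le)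
    have "separable_solution d \<alpha> \<rho> \<mu> l (real n * T) t y \<le> 1 / \<rho> t * exp (\<bar>\<alpha>\<bar> * T)"
      using separable_solution_le[of t "real n * T" "real n * T + T"] \<open>t \<in> {real n * T<..real n * T + T}\<close>
        \<rho>_period_start[of n] by simp
    also have "\<dots> \<le> 1 / r * exp (\<bar>\<alpha>\<bar> * T)"
      using \<open>1 / \<rho> t \<le> 1 / r\<close> by (rule mult_right_mono) simp
    finally have "separable_solution d \<alpha> \<rho> \<mu> l (real n * T) t y \<le> 1 / r * exp (\<bar>\<alpha>\<bar> * T)" .
    then have "M * separable_solution d \<alpha> \<rho> \<mu> l (real n * T) t y \<le> M * (1 / r * exp (\<bar>\<alpha>\<bar> * T))"
      using \<open>M \<ge> 0\<close> by (rule mult_left_mono)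
    then show "0 \<le> v t y \<and> v t y \<le> \<kappa> * m * exp (\<bar>\<alpha>\<bar> * T) / r * decay_factor \<kappa> \<mu> ^ n"
      using v unfolding M_def by (simp add: mult_ac)
  qed
qed

end

theorem theorem3p2:
  fixes d \<alpha> \<gamma> T l0 :: real
    and \<rho> \<rho>' g g' v0 :: "real \<Rightarrow> real"
    and v :: "real \<Rightarrow> real \<Rightarrow> real"
  assumes pos: "d > 0" "\<alpha> > 0" "\<gamma> > 0" "T > 0" "l0 > 0"
    and rho_pos: "\<forall>t. \<rho> t > 0"
    and rho_deriv: "\<forall>t. (\<rho> has_real_derivative \<rho>' t) (at t)"
    and rho'_cont: "continuous_on UNIV \<rho>'"
    and rho_per: "\<forall>t. \<rho> (t + T) = \<rho> t"
    and rho0: "\<rho> 0 = 1"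
    and g_deriv: "\<forall>u\<ge>0. (g has_real_derivative g' u) (at u within {0..})"
    and g'_cont: "continuous_on {0..} g'"
    and g0: "g 0 = 0"
    and g'0: "g' 0 > 0"
    and g_pos: "\<forall>u>0. g u > 0"
    and g_ratio_mono: "\<forall>u1 u2. 0 < u1 \<and> u1 \<le> u2 \<longrightarrow> g u2 / u2 \<le> g u1 / u1"
    and g_ratio_bd: "\<forall>u>0. 0 < g u / u \<and> g u / u < 1"
    and B1: "mono_on {0..} g"
    and B2: "\<exists>D \<sigma> \<nu>. D > 0 \<and> \<sigma> > 0 \<and> \<nu> > 1 \<and>
               (\<forall>u. 0 \<le> u \<and> u \<le> \<sigma> \<longrightarrow> g u \<ge> g' 0 * u - D * u powr \<nu>)"
    and R0: "\<alpha> / (d * (pi / l0)\<^sup>2 / T * integral {0..T} (\<lambda>t. 1 / (\<rho> t)\<^sup>2)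
                  - 1 / T * ln (g' 0)) < 1"
    and v0_cont: "continuous_on {0..l0} v0"
    and v0_nonneg: "\<forall>y\<in>{0..l0}. v0 y \<ge> 0"
    and v0_nz: "\<exists>y\<in>{0<..<l0}. v0 y \<noteq> 0"
    and sol: "impulsive_solution d \<alpha> \<gamma> \<rho> \<rho>' g T l0 v0 v"
  shows "\<forall>\<epsilon>>0. \<exists>t0. \<forall>t\<ge>t0. \<forall>y\<in>{0..l0}. \<bar>v t y\<bar> < \<epsilon>"
proof -
  interpret periodic_rd_coefficients d \<alpha> \<gamma> \<rho> \<rho>' T
    using pos rho_pos rho_deriv rho'_cont rho_per rho0 by unfold_locales auto
  have g'_at_0: "(g has_real_derivative g' 0) (at 0 within {0..})"
    using g_deriv by simp
  have g_bounds: "0 \<le> g u \<and> g u \<le> g' 0 * u" if "u \<ge> 0" for u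
    using le_deriv_mult_of_ratio_antimono[OF g'_at_0 g0 g_ratio_mono that] g0 g_pos[rule_format, of u] that
    by (cases "u = 0") auto
  have "g' 0 \<le> 1"
    using deriv_le_one_of_ratio_lt_one[OF g'_at_0 g0] g_ratio_bd by blast
  have "integral {0..T} (\<lambda>t. 1 / (\<rho> t)\<^sup>2) > 0"
    using pos(4) \<rho>_nonzero by (intro integral_pos_real inverse_square_cont) auto
  then obtain \<mu> where \<mu>: "0 < \<mu>" "\<mu> * l0 < pi" "decay_factor (g' 0) \<mu> < 1"
    unfolding decay_factor_def by (rule exists_decay_frequency[OF pos(1,4,5) _ g'0 \<open>g' 0 \<le> 1\<close> R0])
  obtain K where K: "\<And>n t y. t \<in> {real n * T<..real (Suc n) * T} \<Longrightarrow> y \<in> {0..l0} \<Longrightarrow>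
      0 \<le> v t y \<and> v t y \<le> K * decay_factor (g' 0) \<mu> ^ n"
    using impulsive_solution_geometric_decay[OF pos(5) g_bounds \<mu>(1,2) v0_cont v0_nonneg sol] by metis
  have "0 \<le> decay_factor (g' 0) \<mu>"
    unfolding decay_factor_def using g'0 by simp
  moreover have "\<bar>v t y\<bar> \<le> K * decay_factor (g' 0) \<mu> ^ n"
    if "t \<in> {real n * T<..real (Suc n) * T}" "y \<in> {0..l0}" for n t y
    using K[OF that] by simp
  ultimately show ?thesis
    by (rule uniformly_tendsto_zero_of_geometric_bound[OF pos(4) _ \<mu>(3)])
qed

end
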